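(* Let $\bar\varepsilon>0$ and let $(W_t)_{t\in[-\bar\varepsilon,\bar\varepsilon]}$ be a process with law $\mu_{\bar\varepsilon}$, $\mu_{-,\bar\varepsilon}$ or $\mu_{+,\bar\varepsilon}$. Let $(W''_t)_{t\in[-\bar\varepsilon,\bar\varepsilon]}$ be a Brownian motion whose increments $(W''_t-W''_{-\bar\varepsilon})_t$ are independent of $W$, with $W''_{-\bar\varepsilon}\ge W_{-\bar\varepsilon}$, and let $W'$ be the reflection of $W''$ on $W$. Then for every $\delta>0$ there exists $\bar\varepsilon'\in(0,\bar\varepsilon]$ such that $\mathbb{P}(\forall t\in[-\bar\varepsilon',\bar\varepsilon'],\ W'_t>W_t)\ge1-\delta$.
   Context: All Brownian motions have a common variance $\sigma^2>0$ per unit time. Reflection: for $a<b$, a continuous $f:[a,b]\to\mathbb{R}$ and a Brownian path $B$ with $B_a\ge f(a)$, the reflection of $B$ on $f$ is the process $B'$ defined as follows: if $B_a=f(a)$, $B'_t=B_t+\sup_{a\le s\le t}(f(s)-B_s)$; if $B_a>f(a)$, with $t_0=b\wedge\inf\{t\in[a,b]:B_t=f(t)\}$, $B'_t=B_t$ for $t\le t_0$ and $B'_t=B_t+\sup_{t_0\le s\le t}(f(s)-B_s)$ for $t\in[t_0,b]$. Laws: $\mu_{\bar\varepsilon}$ is the law of a two-sided Brownian motion $(W_t)_{t\in[-\bar\varepsilon,\bar\varepsilon]}$ with $W_0=0$; $\mu_{-,\bar\varepsilon}$ is the law of $W'$ with $W'_t=W_t$ on $[-\bar\varepsilon,0]$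 and $(W'_t)_{t\in[0,\bar\varepsilon]}$ an independent Brownian motion started at $W'_0=0$ reflected on $(W_t)_{t\in[0,\bar\varepsilon]}$; $\mu_{+,\bar\varepsilon}$ is the law of $W'$ with $W'_t=W_t$ on $[0,\bar\varepsilon]$ and $(W'_{-t})_{t\in[0,\bar\varepsilon]}$ an independent Brownian motion started at $0$ reflected on $(W_{-t})_{t\in[0,\bar\varepsilon]}$. *)

theory Defs
  imports "HOL-Probability.Probability"
begin

text \<open>Processes are functions X :: real => 'a => real (time, outcome).
  The parameter sig is the standard deviation per unit time (variance sig^2 per unit time).\<close>

definition bm_on :: "'a measure \<Rightarrow> real \<Rightarrow> real \<Rightarrow> real \<Rightarrow> (real \<Rightarrow> 'a \<Rightarrow> real) \<Rightarrow> bool" where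
  "bm_on M sig a b X \<longleftrightarrow>
     prob_space M \<and>
     (\<forall>t\<in>{a..b}. X t \<in> borel_measurable M) \<and>
     (\<forall>\<omega>\<in>space M. continuous_on {a..b} (\<lambda>t. X t \<omega>)) \<and>
     (\<forall>(n::nat) (ts::nat \<Rightarrow> real).
        a \<le> ts 0 \<and> ts n \<le> b \<and> (\<forall>i<n. ts i < ts (Suc i)) \<longrightarrow>
          prob_space.indep_vars M (\<lambda>_. borel) (\<lambda>i \<omega>. X (ts (Suc i)) \<omega> - X (ts i) \<omega>) {..<n} \<and>
          (\<forall>i<n. distributed M lborel (\<lambda>\<omega>. X (ts (Suc i)) \<omega> - X (ts i) \<omega>)
                   (\<lambda>x. ennreal (normal_density 0 (sig * sqrt (ts (Suc i) - ts i)) x))))"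

definition path_map :: "real set \<Rightarrow> (real \<Rightarrow> 'a \<Rightarrow> real) \<Rightarrow> 'a \<Rightarrow> (real \<Rightarrow> real)" where
  "path_map I X = (\<lambda>\<omega>. restrict (\<lambda>t. X t \<omega>) I)"

definition path_law :: "'a measure \<Rightarrow> real set \<Rightarrow> (real \<Rightarrow> 'a \<Rightarrow> real) \<Rightarrow> (real \<Rightarrow> real) measure" where
  "path_law M I X = distr M (Pi\<^sub>M I (\<lambda>_. borel)) (path_map I X)"

definition reflect :: "real \<Rightarrow> real \<Rightarrow> (real \<Rightarrow> real) \<Rightarrow> (real \<Rightarrow> real) \<Rightarrow> real \<Rightarrow> real" where
  "reflect a b f B t =
     (if B a = f a then B t + Sup ((\<lambda>s. f s - B s) ` {a..t})
      else (let Z = {s\<in>{a..b}. B s = f s};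
                t0 = (if Z = {} then b else min b (Inf Z))
            in if t \<le> t0 then B t else B t + Sup ((\<lambda>s. f s - B s) ` {t0..t})))"

definition two_sided_bm :: "'a measure \<Rightarrow> real \<Rightarrow> real \<Rightarrow> (real \<Rightarrow> 'a \<Rightarrow> real) \<Rightarrow> bool" where
  "two_sided_bm M sig e W \<longleftrightarrow> bm_on M sig (-e) e W \<and> (\<forall>\<omega>\<in>space M. W 0 \<omega> = 0)"

definition cont_process :: "'a measure \<Rightarrow> real \<Rightarrow> (real \<Rightarrow> 'a \<Rightarrow> real) \<Rightarrow> bool" where
  "cont_process M e X \<longleftrightarrow> prob_space M \<and> (\<forall>t\<in>{-e..e}. X t \<in> borel_measurable M) \<and>
     (\<forall>\<omega>\<in>space M. continuous_on {-e..e} (\<lambda>t. X t \<omega>))"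

type_synonym aux_space = "(real \<Rightarrow> real) \<times> (real \<Rightarrow> real)"

definition has_law_mu :: "'a measure \<Rightarrow> real \<Rightarrow> real \<Rightarrow> (real \<Rightarrow> 'a \<Rightarrow> real) \<Rightarrow> bool" where
  "has_law_mu M sig e X \<longleftrightarrow> cont_process M e X \<and>
     (\<exists>(N::aux_space measure) V. two_sided_bm N sig e V \<and>
        path_law M {-e..e} X = path_law N {-e..e} V)"

definition has_law_mu_minus :: "'a measure \<Rightarrow> real \<Rightarrow> real \<Rightarrow> (real \<Rightarrow> 'a \<Rightarrow> real) \<Rightarrow> bool" where
  "has_law_mu_minus M sig e X \<longleftrightarrow> cont_process M e X \<and>
     (\<exists>(N::aux_space measure) V B. two_sided_bm N sig e V \<and> bm_on N sig 0 e B \<and>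
        (\<forall>\<omega>\<in>space N. B 0 \<omega> = 0) \<and>
        prob_space.indep_var N (Pi\<^sub>M {-e..e} (\<lambda>_. borel)) (path_map {-e..e} V)
                               (Pi\<^sub>M {0..e} (\<lambda>_. borel)) (path_map {0..e} B) \<and>
        path_law M {-e..e} X =
          path_law N {-e..e} (\<lambda>t \<omega>. if t \<le> 0 then V t \<omega>
                                      else reflect 0 e (\<lambda>s. V s \<omega>) (\<lambda>s. B s \<omega>) t))"

definition has_law_mu_plus :: "'a measure \<Rightarrow> real \<Rightarrow> real \<Rightarrow> (real \<Rightarrow> 'a \<Rightarrow> real) \<Rightarrow> bool" where
  "has_law_mu_plus M sig e X \<longleftrightarrow> cont_process M e X \<and>
     (\<exists>(N::aux_space measure) V B. two_sided_bm N sig e V \<and> bm_on N sig 0 e B \<and>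
        (\<forall>\<omega>\<in>space N. B 0 \<omega> = 0) \<and>
        prob_space.indep_var N (Pi\<^sub>M {-e..e} (\<lambda>_. borel)) (path_map {-e..e} V)
                               (Pi\<^sub>M {0..e} (\<lambda>_. borel)) (path_map {0..e} B) \<and>
        path_law M {-e..e} X =
          path_law N {-e..e} (\<lambda>t \<omega>. if 0 \<le> t then V t \<omega>
                                      else reflect 0 e (\<lambda>s. V (-s) \<omega>) (\<lambda>s. B s \<omega>) (-t)))"

end

theory Submission
  imports Defs
begin

text \<open>If the reflected path W' satisfies W' 0 \<le> W 0, then, because the reflection only pushes
  W'' upwards, W'' 0 - W'' s \<le> W 0 - W s for every s \<in> [-e,0]. Under each of the three laws
  these increments of W are dominated by those of a Brownian motion V, and W'' is independent
  of W. Along the geometric grid s_i = -e/m^i the increments of W'' are independent and each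
  exceeds a fixed fraction of its standard deviation with probability at least 1/4, whereas
  V 0 - V s_(i+1) is smaller by a factor of order sqrt m, by Chebyshev. Hence W'' stays below
  W in this sense at all n grid points with probability at most (15/16)^n + 32 n/m, so
  W' 0 > W 0 with probability close to 1, and continuity of the paths together with continuity
  of measure along shrinking windows [-e',e'] gives the theorem.\<close>

section \<open>Continuous functions on a countable dense grid\<close>

text \<open>The endpoint d is added so that the grid is nonempty even when c = d is irrational.\<close>
definition rat_grid :: "real \<Rightarrow> real \<Rightarrow> real set" where
  "rat_grid c d = insert d (\<rat> \<inter> {c..d})"

lemma countable_rat_grid: "countable (rat_grid c d)"
  unfolding rat_grid_def by (auto intro: countable_rat)

lemma rat_grid_nonempty: "rat_grid c d \<noteq> {}"
  by (simp add: rat_grid_def)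

lemma rat_grid_subset: "c \<le> d \<Longrightarrow> rat_grid c d \<subseteq> {c..d}"
  unfolding rat_grid_def by auto

lemma rat_grid_approx:
  assumes "c \<le> x" "x \<le> d" "0 < \<epsilon>"
  shows "\<exists>q\<in>rat_grid c d. \<bar>q - x\<bar> < \<epsilon>"
proof (cases "x = d")
  case True then show ?thesis using assms by (auto simp: rat_grid_def)
next
  case False
  then have "x < min (x + \<epsilon>) d" using assms by auto
  then obtain r where "r \<in> \<rat>" "x < r" "r < min (x + \<epsilon>) d" using Rats_dense_in_real by blast
  then show ?thesis using assms by (intro bexI[of _ r]) (auto simp: rat_grid_def)
qed

lemma continuous_on_Icc_near_rat_grid:
  fixes \<phi> :: "real \<Rightarrow> real"
  assumes "continuous_on {c..d} \<phi>" "c \<le> d" "t \<in> {c..d}" "0 < \<epsilon>"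
  obtains q where "q \<in> rat_grid c d" "\<bar>\<phi> q - \<phi> t\<bar> < \<epsilon>"
proof -
  obtain \<delta> where \<delta>: "\<delta> > 0" "\<forall>x'\<in>{c..d}. dist x' t < \<delta> \<longrightarrow> dist (\<phi> x') (\<phi> t) < \<epsilon>"
    using assms unfolding continuous_on_iff by metis
  obtain q where q: "q \<in> rat_grid c d" "\<bar>q - t\<bar> < \<delta>" using rat_grid_approx[of c t d \<delta>] assms \<delta> by auto
  then have "\<bar>\<phi> q - \<phi> t\<bar> < \<epsilon>" using \<delta> rat_grid_subset[OF assms(2)] by (auto simp: dist_real_def)
  with q that show thesis by blast
qed

lemma continuous_on_Icc_pos_iff_rat_grid:
  fixes \<phi> :: "real \<Rightarrow> real"
  assumes c: "continuous_on {c..d} \<phi>" and cd: "c \<le> d"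
  shows "(\<forall>t\<in>{c..d}. \<phi> t > 0) \<longleftrightarrow> (\<exists>j::nat. \<forall>q\<in>rat_grid c d. \<phi> q \<ge> 1 / Suc j)"
proof
  assume pos: "\<forall>t\<in>{c..d}. \<phi> t > 0"
  obtain x where x: "x \<in> {c..d}" "\<forall>y\<in>{c..d}. \<phi> x \<le> \<phi> y"
    using continuous_attains_inf[OF compact_Icc _ c] cd by auto
  then obtain n where n: "n > 0" "inverse (real n) < \<phi> x"
    using pos ex_inverse_of_nat_less by blast
  then have "1 / Suc (n - 1) < \<phi> x" by (simp add: inverse_eq_divide)
  then show "\<exists>j::nat. \<forall>q\<in>rat_grid c d. \<phi> q \<ge> 1 / Suc j"
    using x rat_grid_subset[OF cd] by (intro exI[of _ "n - 1"]) force
next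
  assume "\<exists>j::nat. \<forall>q\<in>rat_grid c d. \<phi> q \<ge> 1 / Suc j"
  then obtain j where j: "\<forall>q\<in>rat_grid c d. \<phi> q \<ge> 1 / Suc j" by blast
  show "\<forall>t\<in>{c..d}. \<phi> t > 0"
  proof (rule ccontr)
    assume "\<not> (\<forall>t\<in>{c..d}. \<phi> t > 0)"
    then obtain t where t: "t \<in> {c..d}" "\<phi> t \<le> 0" by auto
    obtain q where "q \<in> rat_grid c d" "\<bar>\<phi> q - \<phi> t\<bar> < 1 / Suc j"
      using continuous_on_Icc_near_rat_grid[OF c cd t(1), of "1 / Suc j"] by auto
    then show False using j t by force
  qed
qed

lemma bdd_above_image_continuous_on_Icc:
  fixes \<phi> :: "real \<Rightarrow> real"
  assumes "continuous_on {c..d} \<phi>" "S \<subseteq> {c..d}"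
  shows "bdd_above (\<phi> ` S)"
proof -
  have "bounded (\<phi> ` {c..d})"
    using compact_continuous_image[OF assms(1) compact_Icc] compact_imp_bounded by blast
  then show ?thesis using assms(2) by (meson bdd_above_mono bounded_imp_bdd_above image_mono)
qed

lemma Sup_image_Icc_eq_rat_grid:
  fixes \<phi> :: "real \<Rightarrow> real"
  assumes c: "continuous_on {c..d} \<phi>" and cd: "c \<le> d"
  shows "Sup (\<phi> ` {c..d}) = Sup (\<phi> ` rat_grid c d)"
proof (rule antisym)
  have bdd: "bdd_above (\<phi> ` rat_grid c d)"
    using bdd_above_image_continuous_on_Icc[OF c rat_grid_subset[OF cd]] .
  show "Sup (\<phi> ` rat_grid c d) \<le> Sup (\<phi> ` {c..d})"
    using rat_grid_nonempty rat_grid_subset[OF cd] bdd_above_image_continuous_on_Icc[OF c order_refl]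
    by (intro cSup_subset_mono) auto
  show "Sup (\<phi> ` {c..d}) \<le> Sup (\<phi> ` rat_grid c d)"
  proof (rule cSup_least)
    show "\<phi> ` {c..d} \<noteq> {}" using cd by auto
    fix y assume "y \<in> \<phi> ` {c..d}"
    then obtain t where t: "t \<in> {c..d}" "y = \<phi> t" by auto
    show "y \<le> Sup (\<phi> ` rat_grid c d)"
    proof (rule field_le_epsilon)
      fix \<epsilon> :: real assume "0 < \<epsilon>"
      then obtain q where q: "q \<in> rat_grid c d" "\<bar>\<phi> q - \<phi> t\<bar> < \<epsilon>"
        using continuous_on_Icc_near_rat_grid[OF c cd t(1)] by blast
      moreover have "\<phi> q \<le> Sup (\<phi> ` rat_grid c d)" using q bdd by (intro cSup_upper) auto
      ultimately show "y \<le> Sup (\<phi> ` rat_grid c d) + \<epsilon>" using t by linarith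
    qed
  qed
qed

lemma continuous_on_running_Sup:
  fixes k :: "real \<Rightarrow> real"
  assumes c: "continuous_on {c..d} k"
  shows "continuous_on {c..d} (\<lambda>t. Sup (k ` {c..t}))"
proof -
  let ?R = "\<lambda>t. Sup (k ` {c..t})"
  have bdd: "\<And>t. t \<le> d \<Longrightarrow> bdd_above (k ` {c..t})"
    using bdd_above_image_continuous_on_Icc[OF c] by auto
  have key: "?R t \<le> ?R t' \<and> ?R t' \<le> ?R t + \<epsilon>"
    if "c \<le> t" "t \<le> t'" "t' \<le> d" "0 < \<epsilon>"
       and \<delta>: "\<forall>x\<in>{c..d}. \<forall>x'\<in>{c..d}. dist x' x < \<delta> \<longrightarrow> dist (k x') (k x) < \<epsilon>" "t' - t < \<delta>"
    for t t' \<epsilon> \<delta>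
  proof
    show "?R t \<le> ?R t'" using that bdd[of t'] by (intro cSup_subset_mono) auto
    show "?R t' \<le> ?R t + \<epsilon>"
    proof (rule cSup_least)
      show "k ` {c..t'} \<noteq> {}" using that by auto
      fix y assume "y \<in> k ` {c..t'}"
      then obtain s where s: "s \<in> {c..t'}" "y = k s" by auto
      have kt: "k t \<le> ?R t" using that bdd[of t] by (intro cSup_upper) auto
      show "y \<le> ?R t + \<epsilon>"
      proof (cases "s \<le> t")
        case True
        then have "k s \<le> ?R t" using that s bdd[of t] by (intro cSup_upper) auto
        then show ?thesis using s \<open>0 < \<epsilon>\<close> by simp
      next
        case False
        then have "dist (k s) (k t) < \<epsilon>" using that s by (auto simp: dist_real_def)
        then show ?thesis using s kt by (auto simp: dist_real_def)
      qed
    qed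
  qed
  show ?thesis
    unfolding continuous_on_iff
  proof (intro ballI allI impI)
    fix x \<epsilon> assume x: "x \<in> {c..d}" and ep: "(0::real) < \<epsilon>"
    obtain \<delta> where \<delta>: "\<delta> > 0" "\<forall>x\<in>{c..d}. \<forall>x'\<in>{c..d}. dist x' x < \<delta> \<longrightarrow> dist (k x') (k x) < \<epsilon>/2"
      using compact_uniformly_continuous[OF c compact_Icc] ep
      unfolding uniformly_continuous_on_def by (metis half_gt_zero)
    show "\<exists>\<delta>>0. \<forall>x'\<in>{c..d}. dist x' x < \<delta> \<longrightarrow> dist (?R x') (?R x) < \<epsilon>"
    proof (intro exI[of _ \<delta>] conjI ballI impI)
      fix x' assume x': "x' \<in> {c..d}" "dist x' x < \<delta>"
      show "dist (?R x') (?R x) < \<epsilon>"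
      proof (cases "x \<le> x'")
        case True
        then show ?thesis using key[of x x' "\<epsilon>/2" \<delta>] x x' \<delta> ep by (auto simp: dist_real_def)
      next
        case False
        then show ?thesis using key[of x' x "\<epsilon>/2" \<delta>] x x' \<delta> ep by (auto simp: dist_real_def)
      qed
    qed (use \<delta> in auto)
  qed
qed


section \<open>Reflection of a path on a barrier\<close>

text \<open>Before the first contact of B with f the gap is replaced by 0; this turns both cases
  of the definition of reflect into the single formula of reflect_eq_running_Sup.\<close>
definition reflect_gap :: "real \<Rightarrow> (real \<Rightarrow> real) \<Rightarrow> (real \<Rightarrow> real) \<Rightarrow> real \<Rightarrow> real" where
  "reflect_gap a f B s = (if \<exists>z\<in>{a..s}. B z = f z then f s - B s else 0)"

lemma first_contact:
  assumes f: "continuous_on {a..b} f" and B: "continuous_on {a..b} B"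
    and ne: "{s\<in>{a..b}. B s = f s} \<noteq> {}"
  defines "c0 \<equiv> Inf {s\<in>{a..b}. B s = f s}"
  shows "c0 \<in> {a..b}" "B c0 = f c0" "\<And>z. z \<in> {a..b} \<Longrightarrow> B z = f z \<Longrightarrow> c0 \<le> z"
    "\<And>s. s \<in> {a..b} \<Longrightarrow> reflect_gap a f B s = f (max s c0) - B (max s c0)"
proof -
  let ?Z = "{s\<in>{a..b}. B s = f s}"
  have "closed {s\<in>{a..b}. B s - f s = 0}"
    using B f by (intro continuous_closed_preimage_constant continuous_intros) auto
  then have "closed ?Z" by simp
  moreover have bb: "bdd_below ?Z" by (auto intro!: bdd_belowI[of _ a])
  ultimately have c0Z: "c0 \<in> ?Z" unfolding c0_def using closed_contains_Inf[OF ne] by blast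
  then show "c0 \<in> {a..b}" "B c0 = f c0" by auto
  show le: "\<And>z. z \<in> {a..b} \<Longrightarrow> B z = f z \<Longrightarrow> c0 \<le> z"
    unfolding c0_def using bb by (auto intro!: cInf_lower)
  fix s assume s: "s \<in> {a..b}"
  show "reflect_gap a f B s = f (max s c0) - B (max s c0)"
  proof (cases "c0 \<le> s")
    case True
    then have "\<exists>z\<in>{a..s}. B z = f z" using c0Z by auto
    then show ?thesis using True by (simp add: reflect_gap_def max_def)
  next
    case False
    then have "\<not> (\<exists>z\<in>{a..s}. B z = f z)" using le s by force
    then show ?thesis using False c0Z by (simp add: reflect_gap_def max_def)
  qed
qed

lemma continuous_on_reflect_gap:
  assumes f: "continuous_on {a..b} f" and B: "continuous_on {a..b} B"
  shows "continuous_on {a..b} (reflect_gap a f B)"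
proof (cases "{s\<in>{a..b}. B s = f s} = {}")
  case True
  then have "\<forall>s\<in>{a..b}. reflect_gap a f B s = 0" by (force simp: reflect_gap_def)
  then show ?thesis using continuous_on_cong[OF refl] continuous_on_const by metis
next
  case False
  define c0 where "c0 = Inf {s\<in>{a..b}. B s = f s}"
  note Z = first_contact[OF f B False, folded c0_def]
  have mc: "continuous_on {a..b} (\<lambda>s. max s c0)" by (intro continuous_intros)
  have mi: "(\<lambda>s. max s c0) ` {a..b} \<subseteq> {a..b}" using Z(1) by auto
  have "continuous_on {a..b} (\<lambda>s. f (max s c0) - B (max s c0))"
    by (intro continuous_intros continuous_on_compose2[OF f mc mi] continuous_on_compose2[OF B mc mi])
  then show ?thesis using Z(4) by (subst continuous_on_cong[OF refl]) auto
qed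

lemma reflect_eq_running_Sup:
  assumes t: "a \<le> t" "t \<le> b" and f: "continuous_on {a..b} f" and B: "continuous_on {a..b} B"
  shows "reflect a b f B t = B t + Sup (reflect_gap a f B ` {a..t})"
proof (cases "{s\<in>{a..b}. B s = f s} = {}")
  case True
  then have "reflect_gap a f B ` {a..t} = {0}" using t by (force simp: reflect_gap_def)
  moreover have "B a \<noteq> f a" using True t by auto
  ultimately show ?thesis using True t by (simp add: reflect_def Let_def)
next
  case nonempty: False
  define c0 where "c0 = Inf {s\<in>{a..b}. B s = f s}"
  note Z = first_contact[OF f B nonempty, folded c0_def]
  have gap: "reflect_gap a f B ` {a..t} = (\<lambda>s. f s - B s) ` ((\<lambda>s. max s c0) ` {a..t})"
    unfolding image_image using Z(4) t by (intro image_cong) auto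
  have unfold: "reflect a b f B t = (if t \<le> c0 then B t else B t + Sup ((\<lambda>s. f s - B s) ` {c0..t}))"
  proof (cases "B a = f a")
    case True
    then have "c0 = a" using Z(1) Z(3)[of a] t by auto
    then show ?thesis using True t by (auto simp: reflect_def)
  next
    case False
    have "reflect a b f B t
        = (if t \<le> min b c0 then B t else B t + Sup ((\<lambda>s. f s - B s) ` {min b c0..t}))"
      unfolding reflect_def Let_def c0_def by (simp only: nonempty False if_False)
    moreover have "min b c0 = c0" using Z(1) by simp
    ultimately show ?thesis by simp
  qed
  show ?thesis
  proof (cases "t \<le> c0")
    case True
    then have "(\<lambda>s. max s c0) ` {a..t} = {c0}" using t by (force simp: max_def)
    then show ?thesis using gap unfold True Z(2) by simp
  next
    case False
    then have "(\<lambda>s. max s c0) ` {a..t} = {c0..t}"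
      using Z(1) by (force simp: max_def image_iff intro: bexI[where x=c0])
    then show ?thesis using gap unfold False by simp
  qed
qed

lemma continuous_on_reflect:
  assumes f: "continuous_on {a..b} f" and B: "continuous_on {a..b} B"
  shows "continuous_on {a..b} (reflect a b f B)"
proof -
  have "continuous_on {a..b} (\<lambda>t. B t + Sup (reflect_gap a f B ` {a..t}))"
    by (intro continuous_intros B continuous_on_running_Sup continuous_on_reflect_gap f)
  then show ?thesis using reflect_eq_running_Sup[OF _ _ f B] by (subst continuous_on_cong[OF refl]) auto
qed

lemma reflect_ge:
  assumes t: "a \<le> s" "s \<le> t" "t \<le> b" and f: "continuous_on {a..b} f" and B: "continuous_on {a..b} B"
    and start: "B a \<ge> f a"
  shows "reflect a b f B t \<ge> B t + (f s - B s)"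
proof -
  have "f s - B s \<le> reflect_gap a f B s"
  proof (cases "\<exists>z\<in>{a..s}. B z = f z")
    case False
    have "f s - B s < 0"
    proof (rule ccontr)
      assume "\<not> f s - B s < 0"
      moreover have "continuous_on {a..s} (\<lambda>x. f x - B x)"
        using f B t by (intro continuous_intros) (auto elim: continuous_on_subset)
      ultimately obtain x where "x \<in> {a..s}" "B x = f x"
        using IVT'[of "\<lambda>x. f x - B x" a 0 s] t start by force
      with False show False by blast
    qed
    then show ?thesis using False by (simp add: reflect_gap_def)
  qed (simp add: reflect_gap_def)
  also have "\<dots> \<le> Sup (reflect_gap a f B ` {a..t})"
    using bdd_above_image_continuous_on_Icc[OF continuous_on_reflect_gap[OF f B]] t
    by (intro cSup_upper) auto
  finally show ?thesis using reflect_eq_running_Sup[of a t b f B] t f B by simp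
qed

lemma reflect_le_imp_increment_le:
  assumes "a \<le> s" "s \<le> t" "t \<le> b" "continuous_on {a..b} f" "continuous_on {a..b} B"
    and "B a \<ge> f a" and "reflect a b f B t \<le> f t"
  shows "B t - B s \<le> f t - f s"
  using reflect_ge[OF assms(1-6)] assms(7) by linarith


section \<open>Measurability of path functionals\<close>

lemma sets_Collect_forall_pos_continuous:
  fixes \<phi> :: "real \<Rightarrow> 'a \<Rightarrow> real"
  assumes cd: "c \<le> d" and cont: "\<forall>\<omega>\<in>space M. continuous_on {c..d} (\<lambda>t. \<phi> t \<omega>)"
    and meas: "\<forall>t\<in>{c..d}. \<phi> t \<in> borel_measurable M"
  shows "{\<omega>\<in>space M. \<forall>t\<in>{c..d}. \<phi> t \<omega> > 0} \<in> sets M"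
proof -
  have eq: "{\<omega>\<in>space M. \<forall>t\<in>{c..d}. \<phi> t \<omega> > 0}
      = (\<Union>j::nat. \<Inter>q\<in>rat_grid c d. {\<omega>\<in>space M. 1/Suc j \<le> \<phi> q \<omega>})"
  proof (intro equalityI subsetI)
    fix \<omega> assume "\<omega> \<in> {\<omega>\<in>space M. \<forall>t\<in>{c..d}. \<phi> t \<omega> > 0}"
    then show "\<omega> \<in> (\<Union>j::nat. \<Inter>q\<in>rat_grid c d. {\<omega>\<in>space M. 1/Suc j \<le> \<phi> q \<omega>})"
      using continuous_on_Icc_pos_iff_rat_grid[OF _ cd, of "\<lambda>t. \<phi> t \<omega>"] cont by auto
  next
    fix \<omega> assume "\<omega> \<in> (\<Union>j::nat. \<Inter>q\<in>rat_grid c d. {\<omega>\<in>space M. 1/Suc j \<le> \<phi> q \<omega>})"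
    then obtain j::nat where j: "\<forall>q\<in>rat_grid c d. \<omega> \<in> space M \<and> 1/Suc j \<le> \<phi> q \<omega>" by auto
    then have "\<omega> \<in> space M" using rat_grid_nonempty by auto
    then show "\<omega> \<in> {\<omega>\<in>space M. \<forall>t\<in>{c..d}. \<phi> t \<omega> > 0}"
      using continuous_on_Icc_pos_iff_rat_grid[OF _ cd, of "\<lambda>t. \<phi> t \<omega>"] cont j by auto
  qed
  have "{\<omega>\<in>space M. 1/Suc j \<le> \<phi> q \<omega>} \<in> sets M" if "q \<in> rat_grid c d" for j q
  proof -
    have [measurable]: "\<phi> q \<in> borel_measurable M" using meas rat_grid_subset[OF cd] that by auto
    show ?thesis by measurable
  qed
  then have "(\<Inter>q\<in>rat_grid c d. {\<omega>\<in>space M. 1/Suc j \<le> \<phi> q \<omega>}) \<in> sets M" for j :: nat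
    by (intro sets.countable_INT' countable_rat_grid rat_grid_nonempty image_subsetI)
  then show ?thesis unfolding eq by (intro sets.countable_UN'' countableI_type)
qed

lemma sets_Collect_exists_zero_continuous:
  fixes \<phi> :: "real \<Rightarrow> 'a \<Rightarrow> real"
  assumes cd: "c \<le> d" and cont: "\<forall>\<omega>\<in>space M. continuous_on {c..d} (\<lambda>t. \<phi> t \<omega>)"
    and meas: "\<forall>t\<in>{c..d}. \<phi> t \<in> borel_measurable M"
  shows "{\<omega>\<in>space M. \<exists>z\<in>{c..d}. \<phi> z \<omega> = 0} \<in> sets M"
proof -
  have "{\<omega>\<in>space M. \<forall>t\<in>{c..d}. \<bar>\<phi> t \<omega>\<bar> > 0} \<in> sets M"
    using cont meas by (intro sets_Collect_forall_pos_continuous cd) (auto intro: continuous_intros)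
  then have "space M - {\<omega>\<in>space M. \<forall>t\<in>{c..d}. \<bar>\<phi> t \<omega>\<bar> > 0} \<in> sets M" by auto
  also have "space M - {\<omega>\<in>space M. \<forall>t\<in>{c..d}. \<bar>\<phi> t \<omega>\<bar> > 0} = {\<omega>\<in>space M. \<exists>z\<in>{c..d}. \<phi> z \<omega> = 0}"
    by auto
  finally show ?thesis .
qed

lemma borel_measurable_Sup_continuous:
  fixes \<phi> :: "real \<Rightarrow> 'a \<Rightarrow> real"
  assumes cd: "c \<le> d" and cont: "\<forall>\<omega>\<in>space M. continuous_on {c..d} (\<lambda>t. \<phi> t \<omega>)"
    and meas: "\<forall>t\<in>{c..d}. \<phi> t \<in> borel_measurable M"
  shows "(\<lambda>\<omega>. Sup ((\<lambda>t. \<phi> t \<omega>) ` {c..d})) \<in> borel_measurable M"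
proof -
  have "(\<lambda>\<omega>. SUP q\<in>rat_grid c d. \<phi> q \<omega>) \<in> borel_measurable M"
  proof (rule borel_measurable_cSUP)
    show "\<And>q. q \<in> rat_grid c d \<Longrightarrow> \<phi> q \<in> borel_measurable M"
      using meas rat_grid_subset[OF cd] by auto
    show "\<And>\<omega>. \<omega> \<in> space M \<Longrightarrow> bdd_above ((\<lambda>q. \<phi> q \<omega>) ` rat_grid c d)"
      using cont by (intro bdd_above_image_continuous_on_Icc[OF _ rat_grid_subset[OF cd]]) auto
  qed (rule countable_rat_grid)
  then show ?thesis
    using Sup_image_Icc_eq_rat_grid[OF _ cd] cont
    by (subst measurable_cong[where g="\<lambda>\<omega>. SUP q\<in>rat_grid c d. \<phi> q \<omega>"]) auto
qed

lemma borel_measurable_reflect_gap: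
  fixes F G :: "real \<Rightarrow> 'a \<Rightarrow> real"
  assumes s: "a \<le> s" "s \<le> b"
    and cF: "\<forall>\<omega>\<in>space M. continuous_on {a..b} (\<lambda>s. F s \<omega>)"
    and cG: "\<forall>\<omega>\<in>space M. continuous_on {a..b} (\<lambda>s. G s \<omega>)"
    and mF: "\<forall>s\<in>{a..b}. F s \<in> borel_measurable M"
    and mG: "\<forall>s\<in>{a..b}. G s \<in> borel_measurable M"
  shows "(\<lambda>\<omega>. reflect_gap a (\<lambda>s. F s \<omega>) (\<lambda>s. G s \<omega>) s) \<in> borel_measurable M"
proof -
  define C where "C = {\<omega>\<in>space M. \<exists>z\<in>{a..s}. G z \<omega> - F z \<omega> = 0}"
  have "\<forall>\<omega>\<in>space M. continuous_on {a..s} (\<lambda>z. G z \<omega> - F z \<omega>)"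
  proof
    fix \<omega> assume "\<omega> \<in> space M"
    then have "continuous_on {a..b} (\<lambda>z. G z \<omega> - F z \<omega>)"
      using cF cG by (intro continuous_intros) auto
    then show "continuous_on {a..s} (\<lambda>z. G z \<omega> - F z \<omega>)"
      by (rule continuous_on_subset) (use s in auto)
  qed
  moreover have "\<forall>z\<in>{a..s}. (\<lambda>\<omega>. G z \<omega> - F z \<omega>) \<in> borel_measurable M"
    using mF mG s by (auto intro!: borel_measurable_diff)
  ultimately have [measurable]: "C \<in> sets M"
    unfolding C_def by (rule sets_Collect_exists_zero_continuous[OF s(1)])
  have [measurable]: "F s \<in> borel_measurable M" "G s \<in> borel_measurable M" using s mF mG by auto
  have "\<And>\<omega>. \<omega> \<in> space M \<Longrightarrow>
      reflect_gap a (\<lambda>s. F s \<omega>) (\<lambda>s. G s \<omega>) s = (if \<omega> \<in> C then F s \<omega> - G s \<omega> else 0)"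
    unfolding reflect_gap_def C_def by simp
  then show ?thesis by (subst measurable_cong) measurable
qed

lemma borel_measurable_reflect:
  fixes F G :: "real \<Rightarrow> 'a \<Rightarrow> real"
  assumes t: "a \<le> t" "t \<le> b"
    and cF: "\<forall>\<omega>\<in>space M. continuous_on {a..b} (\<lambda>s. F s \<omega>)"
    and cG: "\<forall>\<omega>\<in>space M. continuous_on {a..b} (\<lambda>s. G s \<omega>)"
    and mF: "\<forall>s\<in>{a..b}. F s \<in> borel_measurable M"
    and mG: "\<forall>s\<in>{a..b}. G s \<in> borel_measurable M"
  shows "(\<lambda>\<omega>. reflect a b (\<lambda>s. F s \<omega>) (\<lambda>s. G s \<omega>) t) \<in> borel_measurable M"
proof -
  define g where "g s \<omega> = reflect_gap a (\<lambda>s. F s \<omega>) (\<lambda>s. G s \<omega>) s" for s \<omega>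
  have "\<forall>\<omega>\<in>space M. continuous_on {a..t} (\<lambda>s. g s \<omega>)"
  proof
    fix \<omega> assume "\<omega> \<in> space M"
    then have "continuous_on {a..b} (\<lambda>s. g s \<omega>)"
      unfolding g_def using cF cG by (intro continuous_on_reflect_gap) auto
    then show "continuous_on {a..t} (\<lambda>s. g s \<omega>)"
      by (rule continuous_on_subset) (use t in auto)
  qed
  moreover have "\<forall>s\<in>{a..t}. g s \<in> borel_measurable M"
    unfolding g_def using t by (intro ballI borel_measurable_reflect_gap[OF _ _ cF cG mF mG]) auto
  ultimately have "(\<lambda>\<omega>. Sup ((\<lambda>s. g s \<omega>) ` {a..t})) \<in> borel_measurable M"
    by (rule borel_measurable_Sup_continuous[OF t(1)])
  then have sum: "(\<lambda>\<omega>. G t \<omega> + Sup ((\<lambda>s. g s \<omega>) ` {a..t})) \<in> borel_measurable M"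
    using mG t by (intro borel_measurable_add) auto
  have "\<And>\<omega>. \<omega> \<in> space M \<Longrightarrow>
      reflect a b (\<lambda>s. F s \<omega>) (\<lambda>s. G s \<omega>) t = G t \<omega> + Sup ((\<lambda>s. g s \<omega>) ` {a..t})"
    unfolding g_def using reflect_eq_running_Sup[OF t] cF cG by blast
  then show ?thesis by (subst measurable_cong) (use sum in auto)
qed

section \<open>Gaussian estimates\<close>

lemma normal_abs_ge_prob_le:
  assumes "prob_space M" and s: "0 < s" and x: "0 < x"
    and D: "distributed M lborel X (\<lambda>y. ennreal (normal_density 0 s y))"
  shows "measure M {\<omega>\<in>space M. \<bar>X \<omega>\<bar> \<ge> x} \<le> s\<^sup>2 / x\<^sup>2"
proof -
  interpret prob_space M by fact
  have rv[measurable]: "random_variable borel X"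
    using distributed_measurable[OF D] by simp
  have "integrable lborel (\<lambda>y. normal_density 0 s y * y^2)"
    using integrable_normal_moment[where \<mu>=0 and \<sigma>=s and k=2] s by simp
  then have int: "integrable M (\<lambda>\<omega>. X \<omega> ^ 2)"
    using distributed_integrable[OF D, of "\<lambda>y. y^2"] by simp
  have E: "expectation X = 0" using normal_distributed_expectation[OF s D] .
  have V: "variance X = s\<^sup>2" using normal_distributed_variance[OF s D] .
  show ?thesis using Chebyshev_inequality[OF rv int x] E V by simp
qed

lemma normal_density_le_peak: "0 < s \<Longrightarrow> normal_density 0 s x \<le> 1 / (s * sqrt (2*pi))"
proof -
  assume s: "0 < s"
  have "normal_density 0 s x = 1 / sqrt (2 * pi * s\<^sup>2) * exp (-(x - 0)\<^sup>2/ (2 * s\<^sup>2))"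
    by (simp add: normal_density_def)
  also have "\<dots> \<le> 1 / sqrt (2 * pi * s\<^sup>2) * 1"
    by (intro mult_left_mono) auto
  also have "sqrt (2 * pi * s\<^sup>2) = s * sqrt (2*pi)"
    using s by (simp add: real_sqrt_mult mult.commute)
  finally show ?thesis by simp
qed

lemma distributed_measure_Collect_eq:
  assumes D: "distributed M lborel X f" and A: "A \<in> sets borel"
  shows "measure M {\<omega>\<in>space M. X \<omega> \<in> A} = measure (density lborel f) A"
proof -
  have "measure (density lborel f) A = measure (distr M lborel X) A"
    using distributed_distr_eq_density[OF D] by simp
  also have "\<dots> = measure M (X -` A \<inter> space M)"
    using A distributed_measurable[OF D] by (subst measure_distr) auto
  also have "X -` A \<inter> space M = {\<omega>\<in>space M. X \<omega> \<in> A}" by auto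
  finally show ?thesis ..
qed

lemma measure_normal_density_Icc_le_half:
  assumes s: "0 < s" and b: "0 \<le> b" "b \<le> s/2"
  shows "measure (density lborel (\<lambda>y. ennreal (normal_density 0 s y))) {-b..b} \<le> 1/2"
proof -
  define Q where "Q = density lborel (\<lambda>y. ennreal (normal_density 0 s y))"
  interpret Q: prob_space Q unfolding Q_def using prob_space_normal_density[OF s] .
  have "emeasure Q {-b..b} = (\<integral>\<^sup>+y. ennreal (normal_density 0 s y) * indicator {-b..b} y \<partial>lborel)"
    unfolding Q_def by (subst emeasure_density) auto
  also have "\<dots> \<le> (\<integral>\<^sup>+y. ennreal (1 / (s * sqrt (2*pi))) * indicator {-b..b} y \<partial>lborel)"
    by (intro nn_integral_mono) (auto intro!: mult_right_mono ennreal_leI normal_density_le_peak s simp: indicator_def)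
  also have "\<dots> = ennreal (1 / (s * sqrt (2*pi))) * (2*b)"
    using b by (simp add: nn_integral_cmult_indicator)
  finally have "emeasure Q {-b..b} \<le> ennreal (2*b / (s * sqrt (2*pi)))"
    using b s by (simp add: ennreal_mult'[symmetric] mult.commute)
  then have "measure Q {-b..b} \<le> 2*b / (s * sqrt (2*pi))"
    using b s by (simp add: Q.emeasure_eq_measure)
  also have "\<dots> \<le> 2*b / (s*2)"
    using b s pi_gt3 by (intro divide_left_mono mult_pos_pos mult_left_mono) (auto simp: real_le_rsqrt)
  also have "\<dots> \<le> 1/2" using b s by (simp add: field_simps)
  finally show ?thesis unfolding Q_def .
qed

lemma normal_tails_ge_quarter:
  assumes "prob_space M" and s: "0 < s" and b: "0 \<le> b" "b \<le> s/2"
    and D: "distributed M lborel X (\<lambda>y. ennreal (normal_density 0 s y))"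
  shows "measure M {\<omega>\<in>space M. X \<omega> > b} \<ge> 1/4" "measure M {\<omega>\<in>space M. X \<omega> < -b} \<ge> 1/4"
proof -
  interpret prob_space M by fact
  have [measurable]: "X \<in> borel_measurable M"
    using distributed_measurable[OF D] by simp
  have D': "distributed M lborel (\<lambda>\<omega>. - X \<omega>) (\<lambda>y. ennreal (normal_density 0 s y))"
    using normal_density_affine[OF D s, of "-1" 0] by simp
  have upper: "measure M {\<omega>\<in>space M. X \<omega> > b} = measure (density lborel (\<lambda>y. ennreal (normal_density 0 s y))) {b<..}"
    using distributed_measure_Collect_eq[OF D, of "{b<..}"] by simp
  have lower: "measure M {\<omega>\<in>space M. X \<omega> < -b} = measure (density lborel (\<lambda>y. ennreal (normal_density 0 s y))) {b<..}"
    using distributed_measure_Collect_eq[OF D', of "{b<..}"] by (simp add: less_minus_iff)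
  have middle: "measure M {\<omega>\<in>space M. X \<omega> \<in> {-b..b}} \<le> 1/2"
    using distributed_measure_Collect_eq[OF D, of "{-b..b}"] measure_normal_density_Icc_le_half[OF s b] by simp
  have "measure M {\<omega>\<in>space M. X \<omega> > b} + measure M {\<omega>\<in>space M. X \<omega> < -b}
      + measure M {\<omega>\<in>space M. X \<omega> \<in> {-b..b}} = measure M (space M)"
  proof -
    have "measure M {\<omega>\<in>space M. X \<omega> > b} + measure M {\<omega>\<in>space M. X \<omega> < -b}
        = measure M ({\<omega>\<in>space M. X \<omega> > b} \<union> {\<omega>\<in>space M. X \<omega> < -b})"
      using b by (intro measure_Un_AE[symmetric]) (auto simp: fmeasurable_eq_sets)
    also have "\<dots> + measure M {\<omega>\<in>space M. X \<omega> \<in> {-b..b}}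
       = measure M (({\<omega>\<in>space M. X \<omega> > b} \<union> {\<omega>\<in>space M. X \<omega> < -b}) \<union> {\<omega>\<in>space M. X \<omega> \<in> {-b..b}})"
      by (intro measure_Un_AE[symmetric]) (auto simp: fmeasurable_eq_sets)
    also have "({\<omega>\<in>space M. X \<omega> > b} \<union> {\<omega>\<in>space M. X \<omega> < -b}) \<union> {\<omega>\<in>space M. X \<omega> \<in> {-b..b}} = space M"
      by auto
    finally show ?thesis .
  qed
  then show "measure M {\<omega>\<in>space M. X \<omega> > b} \<ge> 1/4" "measure M {\<omega>\<in>space M. X \<omega> < -b} \<ge> 1/4"
    using upper lower middle prob_space by linarith+
qed

section \<open>Brownian increments along a geometric grid\<close>

lemma bm_on_prob_space: "bm_on M \<sigma> a b X \<Longrightarrow> prob_space M"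
  by (simp add: bm_on_def)

lemma bm_on_borel_measurable: "bm_on M \<sigma> a b X \<Longrightarrow> t \<in> {a..b} \<Longrightarrow> X t \<in> borel_measurable M"
  by (simp add: bm_on_def)

lemma bm_on_continuous: "bm_on M \<sigma> a b X \<Longrightarrow> \<omega> \<in> space M \<Longrightarrow> continuous_on {a..b} (\<lambda>t. X t \<omega>)"
  by (simp add: bm_on_def)

lemma bm_on_increment_distributed:
  assumes "bm_on M \<sigma> a b X" "a \<le> s" "s < t" "t \<le> b"
  shows "distributed M lborel (\<lambda>\<omega>. X t \<omega> - X s \<omega>) (\<lambda>x. ennreal (normal_density 0 (\<sigma> * sqrt (t - s)) x))"
proof -
  define ts where "ts = (\<lambda>j::nat. if j = 0 then s else t)"
  have "a \<le> ts 0 \<and> ts 1 \<le> b \<and> (\<forall>i<1. ts i < ts (Suc i))" using assms by (simp add: ts_def)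
  then have "\<forall>i<1. distributed M lborel (\<lambda>\<omega>. X (ts (Suc i)) \<omega> - X (ts i) \<omega>)
                   (\<lambda>x. ennreal (normal_density 0 (\<sigma> * sqrt (ts (Suc i) - ts i)) x))"
    using assms(1) unfolding bm_on_def by blast
  then show ?thesis by (simp add: ts_def)
qed

lemma bm_on_increments_indep:
  assumes "bm_on M \<sigma> a b X" "a \<le> ts 0" "ts n \<le> b" "\<forall>i<n. ts i < ts (Suc i)"
  shows "prob_space.indep_vars M (\<lambda>_. borel) (\<lambda>i \<omega>. X (ts (Suc i)) \<omega> - X (ts i) \<omega>) {..<n}"
  using assms unfolding bm_on_def by blast

definition geo_grid :: "real \<Rightarrow> real \<Rightarrow> nat \<Rightarrow> real" where
  "geo_grid e m i = - (e / m ^ i)"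

definition grid_scale :: "real \<Rightarrow> real \<Rightarrow> real \<Rightarrow> nat \<Rightarrow> real" where
  "grid_scale \<sigma> e m i = \<sigma> * sqrt (e / m ^ i) / 2"

definition tail_factor :: "real \<Rightarrow> real \<Rightarrow> real \<Rightarrow> nat \<Rightarrow> real \<Rightarrow> real" where
  "tail_factor \<sigma> e m i x = (if x \<le> - (grid_scale \<sigma> e m i / 2) then 3/4 else 1)"

text \<open>Bound on the probability that a Brownian motion Y satisfies Y 0 - Y s_i \<le> v i at the
  grid points s_i = geo_grid e m i, i \<le> n. On that event the i-th increment of Y is at most
  v i - v (Suc i) + c_i (c_i = grid_scale) unless Y 0 - Y s_(i+1) is atypically large compared
  with c_i, which Chebyshev bounds by 16/m; a negative level difference costs the factor 3/4
  of tail_factor.\<close>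
definition domination_bound :: "real \<Rightarrow> real \<Rightarrow> real \<Rightarrow> nat \<Rightarrow> (nat \<Rightarrow> real) \<Rightarrow> real" where
  "domination_bound \<sigma> e m n v = (\<Prod>i<n. tail_factor \<sigma> e m i (v i - v (Suc i)))
     + (\<Sum>i<n. 16/m + (if v (Suc i) > grid_scale \<sigma> e m i / 2 then 1 else 0))"

lemma tail_factor_bounds: "0 \<le> tail_factor \<sigma> e m i x" "tail_factor \<sigma> e m i x \<le> 1"
  by (auto simp: tail_factor_def)

lemma borel_measurable_tail_factor[measurable]: "tail_factor \<sigma> e m i \<in> borel_measurable borel"
  unfolding tail_factor_def by measurable

lemma geo_grid_neg: "0 < e \<Longrightarrow> 0 < m \<Longrightarrow> geo_grid e m i < 0"
  by (simp add: geo_grid_def)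

lemma geo_grid_ge: "0 < e \<Longrightarrow> 1 \<le> m \<Longrightarrow> -e \<le> geo_grid e m i"
  by (simp add: geo_grid_def divide_le_eq one_le_power)

lemma geo_grid_mem: "0 < e \<Longrightarrow> 1 \<le> m \<Longrightarrow> geo_grid e m i \<in> {-e..e}"
  using geo_grid_neg[of e m i] geo_grid_ge[of e m i] by auto

lemma geo_grid_less_Suc: "0 < e \<Longrightarrow> 1 < m \<Longrightarrow> geo_grid e m i < geo_grid e m (Suc i)"
  by (simp add: geo_grid_def divide_strict_left_mono)

lemma geo_grid_Suc_diff: "0 < m \<Longrightarrow> geo_grid e m (Suc i) - geo_grid e m i = e / m ^ i * (1 - 1/m)"
  by (simp add: geo_grid_def field_simps)

lemma bm_on_geo_grid_measurable:
  assumes "bm_on M \<sigma> (-e) e Y" "0 < e" "1 \<le> m"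
  shows "Y (geo_grid e m i) \<in> borel_measurable M" "Y 0 \<in> borel_measurable M"
  using bm_on_borel_measurable[OF assms(1)] geo_grid_mem[OF assms(2,3)] assms(2) by auto

lemma bm_on_abs_increment_to_0_prob_le:
  assumes bm: "bm_on M \<sigma> (-e) e X" and \<sigma>: "\<sigma> > 0" and e: "e > 0" and m: "m \<ge> 2"
  shows "measure M {\<omega>\<in>space M. \<bar>X 0 \<omega> - X (geo_grid e m (Suc i)) \<omega>\<bar> \<ge> grid_scale \<sigma> e m i / 2} \<le> 16 / m"
proof -
  have D: "distributed M lborel (\<lambda>\<omega>. X 0 \<omega> - X (geo_grid e m (Suc i)) \<omega>)
     (\<lambda>x. ennreal (normal_density 0 (\<sigma> * sqrt (0 - geo_grid e m (Suc i))) x))"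
    using bm_on_increment_distributed[OF bm geo_grid_ge geo_grid_neg] e m by simp
  have mp: "m ^ i > 0" using m by simp
  have r: "e / m ^ i > 0" using e mp by simp
  have sp: "\<sigma> * sqrt (0 - geo_grid e m (Suc i)) > 0" using \<sigma> geo_grid_neg[OF e, of m "Suc i"] m by simp
  have cp: "grid_scale \<sigma> e m i / 2 > 0" using \<sigma> r by (simp add: grid_scale_def)
  have "measure M {\<omega>\<in>space M. \<bar>X 0 \<omega> - X (geo_grid e m (Suc i)) \<omega>\<bar> \<ge> grid_scale \<sigma> e m i / 2}
      \<le> (\<sigma> * sqrt (0 - geo_grid e m (Suc i)))\<^sup>2 / (grid_scale \<sigma> e m i / 2)\<^sup>2"
    by (rule normal_abs_ge_prob_le[OF bm_on_prob_space[OF bm] sp cp D])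
  also have "(\<sigma> * sqrt (0 - geo_grid e m (Suc i)))\<^sup>2 = \<sigma>\<^sup>2 * (e / m ^ Suc i)"
    using e m by (simp add: geo_grid_def power_mult_distrib)
  also have "(grid_scale \<sigma> e m i / 2)\<^sup>2 = \<sigma>\<^sup>2 * (e / m ^ i) / 16"
    using r by (simp add: grid_scale_def power_mult_distrib power_divide)
  also have "\<sigma>\<^sup>2 * (e / m ^ Suc i) / (\<sigma>\<^sup>2 * (e / m ^ i) / 16) = 16 / m"
    using \<sigma> e mp m by (simp add: field_simps)
  finally show ?thesis .
qed

lemma bm_on_geo_increment_tails:
  assumes bm: "bm_on M \<sigma> (-e) e X" and \<sigma>: "\<sigma> > 0" and e: "e > 0" and m: "m \<ge> 2"
  shows "measure M {\<omega>\<in>space M. X (geo_grid e m (Suc i)) \<omega> - X (geo_grid e m i) \<omega> > grid_scale \<sigma> e m i / 2} \<ge> 1/4"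
    "measure M {\<omega>\<in>space M. X (geo_grid e m (Suc i)) \<omega> - X (geo_grid e m i) \<omega> < - (grid_scale \<sigma> e m i / 2)} \<ge> 1/4"
proof -
  have le: "geo_grid e m (Suc i) \<le> e" using geo_grid_mem[OF e, of m "Suc i"] m by simp
  have D: "distributed M lborel (\<lambda>\<omega>. X (geo_grid e m (Suc i)) \<omega> - X (geo_grid e m i) \<omega>)
     (\<lambda>x. ennreal (normal_density 0 (\<sigma> * sqrt (geo_grid e m (Suc i) - geo_grid e m i)) x))"
    using bm_on_increment_distributed[OF bm geo_grid_ge geo_grid_less_Suc le] e m by simp
  define r where "r = e / m ^ i"
  have mp: "m ^ i > 0" using m by simp
  have r: "r > 0" using e mp by (simp add: r_def)
  have d: "geo_grid e m (Suc i) - geo_grid e m i = r * (1 - 1/m)" using geo_grid_Suc_diff[of m e i] m by (simp add: r_def)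
  have q: "1 - 1/m \<ge> 1/4" using m by (simp add: field_simps)
  have sp: "\<sigma> * sqrt (geo_grid e m (Suc i) - geo_grid e m i) > 0" using \<sigma> geo_grid_less_Suc[OF e, of m i] m by simp
  have b0: "0 \<le> grid_scale \<sigma> e m i / 2" using \<sigma> r by (simp add: grid_scale_def r_def[symmetric])
  have s4: "sqrt (4::real) = 2" using real_sqrt_abs[of 2] by simp
  have "sqrt r = sqrt (4 * (r / 4))" by simp
  also have "\<dots> = sqrt 4 * sqrt (r/4)" by (simp only: real_sqrt_mult)
  also have "\<dots> = 2 * sqrt (r/4)" by (simp only: s4)
  also have "\<dots> \<le> 2 * sqrt (r * (1 - 1/m))"
    using r q by (intro mult_left_mono real_sqrt_le_mono) (auto intro: mult_left_mono[of "1/4" _ r, simplified])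
  finally have "sqrt r \<le> 2 * sqrt (r * (1 - 1/m))" .
  then have "\<sigma> * sqrt r \<le> \<sigma> * (2 * sqrt (r * (1 - 1/m)))" using \<sigma> by (intro mult_left_mono) auto
  then have b1: "grid_scale \<sigma> e m i / 2 \<le> \<sigma> * sqrt (geo_grid e m (Suc i) - geo_grid e m i) / 2"
    by (simp add: grid_scale_def r_def[symmetric] d)
  show "measure M {\<omega>\<in>space M. X (geo_grid e m (Suc i)) \<omega> - X (geo_grid e m i) \<omega> > grid_scale \<sigma> e m i / 2} \<ge> 1/4"
    "measure M {\<omega>\<in>space M. X (geo_grid e m (Suc i)) \<omega> - X (geo_grid e m i) \<omega> < - (grid_scale \<sigma> e m i / 2)} \<ge> 1/4"
    using normal_tails_ge_quarter[OF bm_on_prob_space[OF bm] sp b0 b1 D] by auto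
qed


lemma bm_on_geo_increments_indep:
  assumes bm: "bm_on M \<sigma> (-e) e Y" and e: "e > 0" and m: "m \<ge> 2"
  shows "prob_space.indep_vars M (\<lambda>_. borel)
    (\<lambda>i \<omega>. Y (geo_grid e m (Suc i)) \<omega> - Y (geo_grid e m i) \<omega>) {..<n}"
proof -
  have "geo_grid e m n \<le> e" using geo_grid_mem[OF e, of m n] m by simp
  then show ?thesis
    using bm_on_increments_indep[OF bm, of "geo_grid e m" n] geo_grid_ge[OF e] geo_grid_less_Suc[OF e] m
    by auto
qed

lemma (in prob_space) prob_indep_vars_all_le:
  fixes X :: "nat \<Rightarrow> 'a \<Rightarrow> real"
  assumes "indep_vars (\<lambda>_. borel) X {..<n}"
  shows "prob {\<omega>\<in>space M. \<forall>i<n. X i \<omega> \<le> a i} = (\<Prod>i<n. prob {\<omega>\<in>space M. X i \<omega> \<le> a i})"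
proof (cases "n = 0")
  case False
  then have "prob (\<Inter>i\<in>{..<n}. X i -` {..a i} \<inter> space M) = (\<Prod>i<n. prob (X i -` {..a i} \<inter> space M))"
    by (intro indep_varsD[OF assms]) auto
  moreover have "(\<Inter>i\<in>{..<n}. X i -` {..a i} \<inter> space M) = {\<omega>\<in>space M. \<forall>i<n. X i \<omega> \<le> a i}"
    using False by auto
  moreover have "X i -` {..a i} \<inter> space M = {\<omega>\<in>space M. X i \<omega> \<le> a i}" for i
    by auto
  ultimately show ?thesis by simp
qed (simp add: prob_space)

lemma prob_geo_increment_le_tail_factor:
  assumes bm: "bm_on M \<sigma> (-e) e Y" and \<sigma>: "\<sigma> > 0" and e: "e > 0" and m: "m \<ge> 2"
  shows "measure M {\<omega>\<in>space M. Y (geo_grid e m (Suc i)) \<omega> - Y (geo_grid e m i) \<omega> \<le> d + grid_scale \<sigma> e m i}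
    \<le> tail_factor \<sigma> e m i d"
proof -
  interpret prob_space M using bm_on_prob_space[OF bm] .
  have m1: "1 \<le> m" using m by simp
  note [measurable] = bm_on_geo_grid_measurable[OF bm e m1]
  let ?inc = "\<lambda>\<omega>. Y (geo_grid e m (Suc i)) \<omega> - Y (geo_grid e m i) \<omega>" and ?c = "grid_scale \<sigma> e m i"
  show ?thesis
  proof (cases "d \<le> - (?c / 2)")
    case True
    have "{\<omega>\<in>space M. ?inc \<omega> > ?c / 2} \<in> sets M" by measurable
    moreover have "measure M {\<omega>\<in>space M. ?inc \<omega> \<le> d + ?c} \<le> measure M (space M - {\<omega>\<in>space M. ?inc \<omega> > ?c / 2})"
      using True by (intro finite_measure_mono) auto
    ultimately have "measure M {\<omega>\<in>space M. ?inc \<omega> \<le> d + ?c} \<le> 1 - measure M {\<omega>\<in>space M. ?inc \<omega> > ?c / 2}"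
      by (simp add: prob_compl)
    also have "\<dots> \<le> 3/4" using bm_on_geo_increment_tails(1)[OF bm \<sigma> e m, of i] by simp
    finally show ?thesis using True by (simp add: tail_factor_def)
  qed (simp add: tail_factor_def)
qed

lemma prob_geo_level_miss_le:
  assumes bm: "bm_on M \<sigma> (-e) e Y" and \<sigma>: "\<sigma> > 0" and e: "e > 0" and m: "m \<ge> 2"
  shows "measure M {\<omega>\<in>space M. Y 0 \<omega> - Y (geo_grid e m (Suc i)) \<omega> < w - grid_scale \<sigma> e m i}
    \<le> 16/m + (if w > grid_scale \<sigma> e m i / 2 then 1 else 0)"
proof -
  interpret prob_space M using bm_on_prob_space[OF bm] .
  have m1: "1 \<le> m" using m by simp
  note [measurable] = bm_on_geo_grid_measurable[OF bm e m1]
  show ?thesis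
  proof (cases "w > grid_scale \<sigma> e m i / 2")
    case True
    have "0 \<le> 16/m" using m by simp
    then show ?thesis using True prob_le_1 by (smt (verit))
  next
    case False
    then have "measure M {\<omega>\<in>space M. Y 0 \<omega> - Y (geo_grid e m (Suc i)) \<omega> < w - grid_scale \<sigma> e m i}
        \<le> measure M {\<omega>\<in>space M. \<bar>Y 0 \<omega> - Y (geo_grid e m (Suc i)) \<omega>\<bar> \<ge> grid_scale \<sigma> e m i / 2}"
      by (intro finite_measure_mono) (auto simp: abs_if)
    also have "\<dots> \<le> 16/m" by (rule bm_on_abs_increment_to_0_prob_le[OF bm \<sigma> e m])
    finally show ?thesis using False by simp
  qed
qed

lemma prob_geo_dominated_le:
  assumes bm: "bm_on M \<sigma> (-e) e Y" and \<sigma>: "\<sigma> > 0" and e: "e > 0" and m: "m \<ge> 2"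
  shows "measure M {\<omega>\<in>space M. \<forall>i\<le>n. Y 0 \<omega> - Y (geo_grid e m i) \<omega> \<le> v i}
     \<le> domination_bound \<sigma> e m n v"
proof -
  interpret prob_space M using bm_on_prob_space[OF bm] .
  have m1: "1 \<le> m" using m by simp
  note [measurable] = bm_on_geo_grid_measurable[OF bm e m1]
  define c where "c i = grid_scale \<sigma> e m i" for i
  define inc where "inc i \<omega> = Y (geo_grid e m (Suc i)) \<omega> - Y (geo_grid e m i) \<omega>" for i \<omega>
  define I where "I = {\<omega>\<in>space M. \<forall>i<n. inc i \<omega> \<le> v i - v (Suc i) + c i}"
  define U where "U i = {\<omega>\<in>space M. Y 0 \<omega> - Y (geo_grid e m (Suc i)) \<omega> < v (Suc i) - c i}" for i
  have sI: "I \<in> sets M" unfolding I_def inc_def by measurable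
  have sU: "U i \<in> sets M" for i unfolding U_def by measurable
  have "{\<omega>\<in>space M. \<forall>i\<le>n. Y 0 \<omega> - Y (geo_grid e m i) \<omega> \<le> v i} \<subseteq> I \<union> (\<Union>i<n. U i)"
  proof
    fix \<omega> assume \<omega>: "\<omega> \<in> {\<omega>\<in>space M. \<forall>i\<le>n. Y 0 \<omega> - Y (geo_grid e m i) \<omega> \<le> v i}"
    show "\<omega> \<in> I \<union> (\<Union>i<n. U i)"
    proof (cases "\<omega> \<in> (\<Union>i<n. U i)")
      case False
      have "inc i \<omega> \<le> v i - v (Suc i) + c i" if "i < n" for i
      proof -
        have "\<omega> \<notin> U i" using False that by blast
        then have "Y 0 \<omega> - Y (geo_grid e m (Suc i)) \<omega> \<ge> v (Suc i) - c i"
          using \<omega> by (simp add: U_def not_less)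
        moreover have "Y 0 \<omega> - Y (geo_grid e m i) \<omega> \<le> v i" using \<omega> that by auto
        ultimately show ?thesis by (simp add: inc_def)
      qed
      then show ?thesis using \<omega> by (auto simp: I_def)
    qed simp
  qed
  then have "measure M {\<omega>\<in>space M. \<forall>i\<le>n. Y 0 \<omega> - Y (geo_grid e m i) \<omega> \<le> v i}
      \<le> measure M (I \<union> (\<Union>i<n. U i))"
    using sI sU by (intro finite_measure_mono) auto
  also have "\<dots> \<le> measure M I + measure M (\<Union>i<n. U i)"
    using sI sU by (intro measure_subadditive) auto
  finally have "measure M {\<omega>\<in>space M. \<forall>i\<le>n. Y 0 \<omega> - Y (geo_grid e m i) \<omega> \<le> v i}
      \<le> measure M I + measure M (\<Union>i<n. U i)" .
  moreover have "measure M (\<Union>i<n. U i) \<le> (\<Sum>i<n. measure M (U i))"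
    using sU by (intro finite_measure_subadditive_finite) auto
  moreover have "measure M I = (\<Prod>i<n. measure M {\<omega>\<in>space M. inc i \<omega> \<le> v i - v (Suc i) + c i})"
    unfolding I_def inc_def by (rule prob_indep_vars_all_le[OF bm_on_geo_increments_indep[OF bm e m]])
  moreover have "\<dots> \<le> (\<Prod>i<n. tail_factor \<sigma> e m i (v i - v (Suc i)))"
    unfolding inc_def c_def using prob_geo_increment_le_tail_factor[OF bm \<sigma> e m]
    by (intro prod_mono) auto
  moreover have "(\<Sum>i<n. measure M (U i)) \<le> (\<Sum>i<n. 16/m + (if v (Suc i) > grid_scale \<sigma> e m i / 2 then 1 else 0))"
    unfolding U_def c_def using prob_geo_level_miss_le[OF bm \<sigma> e m] by (intro sum_mono) auto
  ultimately show ?thesis unfolding domination_bound_def by linarith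
qed

lemma emeasure_geo_dominated_le:
  assumes bm: "bm_on M \<sigma> (-e) e Y" and \<sigma>: "\<sigma> > 0" and e: "e > 0" and m: "m \<ge> 2"
    and le: "\<And>i. i \<le> n \<Longrightarrow> x i \<le> v i"
  shows "emeasure M {\<omega>\<in>space M. \<forall>i\<le>n. Y 0 \<omega> - Y (geo_grid e m i) \<omega> \<le> x i}
    \<le> domination_bound \<sigma> e m n v"
proof -
  interpret prob_space M using bm_on_prob_space[OF bm] .
  have m1: "1 \<le> m" using m by simp
  note [measurable] = bm_on_geo_grid_measurable[OF bm e m1]
  have "{\<omega>\<in>space M. \<forall>i\<le>n. Y 0 \<omega> - Y (geo_grid e m i) \<omega> \<le> x i}
      \<subseteq> {\<omega>\<in>space M. \<forall>i\<le>n. Y 0 \<omega> - Y (geo_grid e m i) \<omega> \<le> v i}"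
    using le by (auto intro: order.trans)
  then have "emeasure M {\<omega>\<in>space M. \<forall>i\<le>n. Y 0 \<omega> - Y (geo_grid e m i) \<omega> \<le> x i}
      \<le> emeasure M {\<omega>\<in>space M. \<forall>i\<le>n. Y 0 \<omega> - Y (geo_grid e m i) \<omega> \<le> v i}"
    by (intro emeasure_mono) measurable
  also have "\<dots> \<le> domination_bound \<sigma> e m n v"
    unfolding emeasure_eq_measure by (intro ennreal_leI prob_geo_dominated_le[OF bm \<sigma> e m])
  finally show ?thesis .
qed

lemma integral_one_minus_quarter_indicator:
  assumes "prob_space N" "S \<in> sets N"
  shows "(\<integral>\<omega>. 1 - 1/4 * indicator S \<omega> \<partial>N) = (1 - 1/4 * measure N S :: real)"
    "integrable N (\<lambda>\<omega>. 1 - 1/4 * indicator S \<omega> :: real)"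
proof -
  interpret prob_space N by fact
  have i1: "integrable N (\<lambda>\<omega>. 1::real)" by simp
  have i2: "integrable N (\<lambda>\<omega>. 1/4 * indicator S \<omega> :: real)" using assms(2)
    by (intro integrable_mult_right integrable_real_indicator) (auto simp: emeasure_eq_measure)
  show "integrable N (\<lambda>\<omega>. 1 - 1/4 * indicator S \<omega> :: real)" using i1 i2 by (rule Bochner_Integration.integrable_diff)
  have "(\<integral>\<omega>. 1 - 1/4 * indicator S \<omega> \<partial>N) = (\<integral>\<omega>. 1 \<partial>N) - (\<integral>\<omega>. 1/4 * indicator S \<omega> \<partial>N :: real)"
    using i1 i2 by (rule Bochner_Integration.integral_diff)
  also have "\<dots> = 1 - 1/4 * measure N S" using assms(2) by (simp add: prob_space)
  finally show "(\<integral>\<omega>. 1 - 1/4 * indicator S \<omega> \<partial>N) = (1 - 1/4 * measure N S :: real)" .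
qed

lemma integral_tail_factor_geo_increment_le:
  fixes i :: nat
  assumes bm: "bm_on N \<sigma> (-e) e V" and \<sigma>: "\<sigma> > 0" and e: "e > 0" and m: "m \<ge> 2"
  defines "f \<equiv> \<lambda>\<omega>. tail_factor \<sigma> e m i (V (geo_grid e m (Suc i)) \<omega> - V (geo_grid e m i) \<omega>)"
  shows "integrable N f" and "(\<integral>\<omega>. f \<omega> \<partial>N) \<le> 15/16"
proof -
  interpret prob_space N using bm_on_prob_space[OF bm] .
  have m1: "1 \<le> m" using m by simp
  note [measurable] = bm_on_geo_grid_measurable[OF bm e m1]
  show int: "integrable N f"
    unfolding f_def using tail_factor_bounds
    by (intro integrable_const_bound[where B=1]) (auto simp: abs_le_iff intro: order.trans[OF _ tail_factor_bounds(2)])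
  define S where "S = {\<omega>\<in>space N. V (geo_grid e m (Suc i)) \<omega> - V (geo_grid e m i) \<omega> < - (grid_scale \<sigma> e m i / 2)}"
  have sS: "S \<in> sets N" unfolding S_def by measurable
  have "(\<integral>\<omega>. f \<omega> \<partial>N) \<le> (\<integral>\<omega>. 1 - 1/4 * indicator S \<omega> \<partial>N)"
    using int integral_one_minus_quarter_indicator(2)[OF prob_space_axioms sS]
    by (intro integral_mono) (auto simp: f_def tail_factor_def S_def indicator_def)
  also have "\<dots> = 1 - 1/4 * measure N S" by (rule integral_one_minus_quarter_indicator(1)[OF prob_space_axioms sS])
  also have "\<dots> \<le> 15/16" using bm_on_geo_increment_tails(2)[OF bm \<sigma> e m, of i] by (simp add: S_def)
  finally show "(\<integral>\<omega>. f \<omega> \<partial>N) \<le> 15/16" .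
qed

lemma nn_integral_prod_tail_factor_le:
  assumes bm: "bm_on N \<sigma> (-e) e V" and \<sigma>: "\<sigma> > 0" and e: "e > 0" and m: "m \<ge> 2"
  shows "(\<integral>\<^sup>+\<omega>. ennreal (\<Prod>i<n. tail_factor \<sigma> e m i (V (geo_grid e m (Suc i)) \<omega> - V (geo_grid e m i) \<omega>)) \<partial>N)
    \<le> ennreal ((15/16)^n)"
proof -
  interpret prob_space N using bm_on_prob_space[OF bm] .
  have m1: "1 \<le> m" using m by simp
  note [measurable] = bm_on_geo_grid_measurable[OF bm e m1]
  define f where "f i \<omega> = tail_factor \<sigma> e m i (V (geo_grid e m (Suc i)) \<omega> - V (geo_grid e m i) \<omega>)" for i \<omega>
  note f_int = integral_tail_factor_geo_increment_le[OF bm \<sigma> e m, folded f_def]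
  have f_nonneg: "0 \<le> f i \<omega>" for i \<omega> by (simp add: f_def tail_factor_bounds)
  have "indep_vars (\<lambda>_. borel) (\<lambda>i \<omega>. ennreal (f i \<omega>)) {..<n}"
    unfolding f_def
    using indep_vars_compose2[OF bm_on_geo_increments_indep[OF bm e m, of n],
        of "\<lambda>i x. ennreal (tail_factor \<sigma> e m i x)" "\<lambda>_. borel"] by measurable
  then have "(\<integral>\<^sup>+\<omega>. (\<Prod>i<n. ennreal (f i \<omega>)) \<partial>N) = (\<Prod>i<n. \<integral>\<^sup>+\<omega>. ennreal (f i \<omega>) \<partial>N)"
    by (intro indep_vars_nn_integral) auto
  also have "\<dots> = ennreal (\<Prod>i<n. \<integral>\<omega>. f i \<omega> \<partial>N)"
    using f_int(1) f_nonneg by (simp add: nn_integral_eq_integral integral_nonneg_AE prod_ennreal)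
  also have "\<dots> \<le> ennreal (\<Prod>i<n. 15/16)"
    using f_int(2) f_nonneg by (intro ennreal_leI prod_mono) (auto intro: integral_nonneg_AE)
  finally show ?thesis using f_nonneg by (simp add: f_def prod_ennreal prod_nonneg)
qed

lemma nn_integral_level_miss_le:
  assumes bm: "bm_on N \<sigma> (-e) e V" and \<sigma>: "\<sigma> > 0" and e: "e > 0" and m: "m \<ge> 2"
  shows "(\<integral>\<^sup>+\<omega>. ennreal (16/m + (if V 0 \<omega> - V (geo_grid e m (Suc i)) \<omega> > grid_scale \<sigma> e m i / 2 then 1 else 0)) \<partial>N)
    \<le> ennreal (32/m)"
proof -
  interpret prob_space N using bm_on_prob_space[OF bm] .
  have m1: "1 \<le> m" using m by simp
  note [measurable] = bm_on_geo_grid_measurable[OF bm e m1]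
  define Q where "Q = {\<omega>\<in>space N. \<bar>V 0 \<omega> - V (geo_grid e m (Suc i)) \<omega>\<bar> \<ge> grid_scale \<sigma> e m i / 2}"
  have sQ: "Q \<in> sets N" unfolding Q_def by measurable
  have m16: "0 \<le> 16/m" using m by simp
  have "(\<integral>\<^sup>+\<omega>. ennreal (16/m + (if V 0 \<omega> - V (geo_grid e m (Suc i)) \<omega> > grid_scale \<sigma> e m i / 2 then 1 else 0)) \<partial>N)
     \<le> (\<integral>\<^sup>+\<omega>. ennreal (16/m) + indicator Q \<omega> \<partial>N)"
  proof (intro nn_integral_mono)
    fix \<omega> assume \<omega>: "\<omega> \<in> space N"
    show "ennreal (16/m + (if V 0 \<omega> - V (geo_grid e m (Suc i)) \<omega> > grid_scale \<sigma> e m i / 2 then 1 else 0))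
        \<le> ennreal (16/m) + indicator Q \<omega>"
    proof (cases "V 0 \<omega> - V (geo_grid e m (Suc i)) \<omega> > grid_scale \<sigma> e m i / 2")
      case True
      then have "\<omega> \<in> Q" using \<omega> by (auto simp: Q_def abs_if)
      then show ?thesis using True m16 by (simp add: ennreal_plus)
    qed (simp add: indicator_def)
  qed
  also have "\<dots> = ennreal (16/m) + ennreal (measure N Q)"
    using sQ by (subst nn_integral_add) (auto simp: emeasure_eq_measure prob_space)
  also have "\<dots> \<le> ennreal (16/m) + ennreal (16/m)"
    unfolding Q_def by (intro add_left_mono ennreal_leI bm_on_abs_increment_to_0_prob_le[OF bm \<sigma> e m])
  also have "\<dots> = ennreal (32/m)" using m16 by (simp add: ennreal_plus[symmetric] del: ennreal_plus)
  finally show ?thesis .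
qed

lemma nn_integral_domination_bound_le:
  assumes bm: "bm_on N \<sigma> (-e) e V" and \<sigma>: "\<sigma> > 0" and e: "e > 0" and m: "m \<ge> 2"
  shows "(\<integral>\<^sup>+\<omega>. domination_bound \<sigma> e m n (\<lambda>i. V 0 \<omega> - V (geo_grid e m i) \<omega>) \<partial>N)
    \<le> ennreal ((15/16)^n + 32 * real n / m)"
proof -
  interpret prob_space N using bm_on_prob_space[OF bm] .
  have m1: "1 \<le> m" using m by simp
  note [measurable] = bm_on_geo_grid_measurable[OF bm e m1]
  let ?P = "\<lambda>\<omega>. \<Prod>i<n. tail_factor \<sigma> e m i (V (geo_grid e m (Suc i)) \<omega> - V (geo_grid e m i) \<omega>)"
  let ?S = "\<lambda>i \<omega>. 16/m + (if V 0 \<omega> - V (geo_grid e m (Suc i)) \<omega> > grid_scale \<sigma> e m i / 2 then 1 else 0::real)"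
  have S_nonneg: "0 \<le> ?S i \<omega>" for i \<omega> using m by simp
  have "domination_bound \<sigma> e m n (\<lambda>i. V 0 \<omega> - V (geo_grid e m i) \<omega>) = ?P \<omega> + (\<Sum>i<n. ?S i \<omega>)" for \<omega>
    unfolding domination_bound_def by (simp add: algebra_simps)
  then have "(\<integral>\<^sup>+\<omega>. domination_bound \<sigma> e m n (\<lambda>i. V 0 \<omega> - V (geo_grid e m i) \<omega>) \<partial>N)
      = (\<integral>\<^sup>+\<omega>. ennreal (?P \<omega>) \<partial>N) + (\<Sum>i<n. \<integral>\<^sup>+\<omega>. ennreal (?S i \<omega>) \<partial>N)"
    using S_nonneg tail_factor_bounds
    by (simp add: ennreal_plus prod_nonneg sum_nonneg sum_ennreal[symmetric] nn_integral_add nn_integral_sum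
        del: sum_ennreal)
  also have "\<dots> \<le> ennreal ((15/16)^n) + (\<Sum>i<n. ennreal (32/m))"
    by (intro add_mono sum_mono nn_integral_prod_tail_factor_le[OF bm \<sigma> e m]
        nn_integral_level_miss_le[OF bm \<sigma> e m])
  also have "(\<Sum>i<n. ennreal (32/m)) = ennreal (32 * real n / m)"
    using m by (subst sum_ennreal) auto
  also have "ennreal ((15/16)^n) + ennreal (32 * real n / m) = ennreal ((15/16)^n + 32 * real n / m)"
    using m by (simp add: ennreal_plus[symmetric] del: ennreal_plus)
  finally show ?thesis .
qed

section \<open>Independence and transfer of path laws\<close>

lemma (in prob_space) emeasure_indep_var_pair:
  assumes indep: "indep_var K X L Y" and G: "G \<in> sets (K \<Otimes>\<^sub>M L)"
  shows "emeasure M {\<omega>\<in>space M. (X \<omega>, Y \<omega>) \<in> G}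
      = (\<integral>\<^sup>+x. emeasure (distr M L Y) (Pair x -` G) \<partial>distr M K X)"
proof -
  have X: "X \<in> measurable M K" and Y: "Y \<in> measurable M L"
    using indep_var_rv1[OF indep] indep_var_rv2[OF indep] by auto
  interpret DY: prob_space "distr M L Y" using Y by (rule prob_space_distr)
  have XY: "(\<lambda>\<omega>. (X \<omega>, Y \<omega>)) \<in> measurable M (K \<Otimes>\<^sub>M L)" using X Y by (rule measurable_Pair)
  have "{\<omega>\<in>space M. (X \<omega>, Y \<omega>) \<in> G} = (\<lambda>\<omega>. (X \<omega>, Y \<omega>)) -` G \<inter> space M" by auto
  then have "emeasure M {\<omega>\<in>space M. (X \<omega>, Y \<omega>) \<in> G}
      = emeasure (distr M (K \<Otimes>\<^sub>M L) (\<lambda>\<omega>. (X \<omega>, Y \<omega>))) G"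
    using XY G by (simp add: emeasure_distr)
  also have "distr M (K \<Otimes>\<^sub>M L) (\<lambda>\<omega>. (X \<omega>, Y \<omega>)) = distr M K X \<Otimes>\<^sub>M distr M L Y"
    using indep unfolding indep_var_distribution_eq by simp
  also have "emeasure (distr M K X \<Otimes>\<^sub>M distr M L Y) G
      = (\<integral>\<^sup>+x. emeasure (distr M L Y) (Pair x -` G) \<partial>distr M K X)"
  proof (rule DY.emeasure_pair_measure_alt)
    have "sets (distr M K X \<Otimes>\<^sub>M distr M L Y) = sets (K \<Otimes>\<^sub>M L)"
      by (intro sets_pair_measure_cong) auto
    then show "G \<in> sets (distr M K X \<Otimes>\<^sub>M distr M L Y)" using G by simp
  qed
  finally show ?thesis .
qed

lemma measurable_path_map:
  "(\<And>t. t \<in> I \<Longrightarrow> X t \<in> borel_measurable M) \<Longrightarrow> path_map I X \<in> measurable M (Pi\<^sub>M I (\<lambda>_. borel))"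
  unfolding path_map_def by (intro measurable_restrict) auto

lemma distr_comp_path_map_eq:
  assumes law: "path_law M I X = path_law N I Y" and f: "f \<in> measurable (Pi\<^sub>M I (\<lambda>_. borel)) K"
    and X: "\<And>t. t \<in> I \<Longrightarrow> X t \<in> borel_measurable M" and Y: "\<And>t. t \<in> I \<Longrightarrow> Y t \<in> borel_measurable N"
  shows "distr M K (f \<circ> path_map I X) = distr N K (f \<circ> path_map I Y)"
proof -
  have "distr M K (f \<circ> path_map I X) = distr (path_law M I X) K f"
    unfolding path_law_def using distr_distr[OF f measurable_path_map, of X M] X by simp
  also have "\<dots> = distr (path_law N I Y) K f" by (simp only: law)
  also have "\<dots> = distr N K (f \<circ> path_map I Y)"
    unfolding path_law_def using distr_distr[OF f measurable_path_map, of Y N] Y by simp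
  finally show ?thesis .
qed

lemma (in prob_space) emeasure_indep_componentwise_le:
  fixes X Y :: "'a \<Rightarrow> nat \<Rightarrow> real"
  assumes indep: "indep_var (Pi\<^sub>M {..n} (\<lambda>_. borel)) X (Pi\<^sub>M {..n} (\<lambda>_. borel)) Y"
  shows "emeasure M {\<omega>\<in>space M. \<forall>i\<le>n. Y \<omega> i \<le> X \<omega> i}
      = (\<integral>\<^sup>+x. emeasure M {\<omega>\<in>space M. \<forall>i\<le>n. Y \<omega> i \<le> x i} \<partial>distr M (Pi\<^sub>M {..n} (\<lambda>_. borel)) X)"
    and "(\<lambda>x. emeasure M {\<omega>\<in>space M. \<forall>i\<le>n. Y \<omega> i \<le> x i}) \<in> borel_measurable (Pi\<^sub>M {..n} (\<lambda>_. borel))"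
proof -
  define K where "K = (Pi\<^sub>M {..n} (\<lambda>_. borel) :: (nat \<Rightarrow> real) measure)"
  have X: "X \<in> measurable M K" and Y: "Y \<in> measurable M K"
    using indep_var_rv1[OF indep] indep_var_rv2[OF indep] by (auto simp: K_def)
  interpret DY: prob_space "distr M K Y" using Y by (rule prob_space_distr)
  define G where "G = {z \<in> space (K \<Otimes>\<^sub>M K). \<forall>i\<in>{..n}. snd z i \<le> fst z i}"
  have "{z \<in> space (K \<Otimes>\<^sub>M K). snd z i \<le> fst z i} \<in> sets (K \<Otimes>\<^sub>M K)" if "i \<in> {..n}" for i
  proof -
    have [measurable]: "(\<lambda>z. snd z i) \<in> borel_measurable (K \<Otimes>\<^sub>M K)" "(\<lambda>z. fst z i) \<in> borel_measurable (K \<Otimes>\<^sub>M K)"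
      using that unfolding K_def by measurable
    show ?thesis by measurable
  qed
  then have "(\<Inter>i\<in>{..n}. {z \<in> space (K \<Otimes>\<^sub>M K). snd z i \<le> fst z i}) \<in> sets (K \<Otimes>\<^sub>M K)"
    by (intro sets.finite_INT) auto
  moreover have "G = (\<Inter>i\<in>{..n}. {z \<in> space (K \<Otimes>\<^sub>M K). snd z i \<le> fst z i})"
    unfolding G_def by auto
  ultimately have G: "G \<in> sets (K \<Otimes>\<^sub>M K)" by simp
  have slice: "emeasure (distr M K Y) (Pair x -` G) = emeasure M {\<omega>\<in>space M. \<forall>i\<le>n. Y \<omega> i \<le> x i}"
    if "x \<in> space K" for x
  proof -
    have "Pair x -` G \<in> sets K" using sets_Pair1[OF G] .
    then have "emeasure (distr M K Y) (Pair x -` G) = emeasure M (Y -` (Pair x -` G) \<inter> space M)"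
      using Y by (simp add: emeasure_distr)
    also have "Y -` (Pair x -` G) \<inter> space M = {\<omega>\<in>space M. \<forall>i\<le>n. Y \<omega> i \<le> x i}"
      using that measurable_space[OF Y] by (auto simp: G_def space_pair_measure)
    finally show ?thesis .
  qed
  have "{\<omega>\<in>space M. \<forall>i\<le>n. Y \<omega> i \<le> X \<omega> i} = {\<omega>\<in>space M. (X \<omega>, Y \<omega>) \<in> G}"
    using measurable_space[OF X] measurable_space[OF Y] by (auto simp: G_def space_pair_measure)
  also have "emeasure M \<dots> = (\<integral>\<^sup>+x. emeasure (distr M K Y) (Pair x -` G) \<partial>distr M K X)"
    by (rule emeasure_indep_var_pair[OF indep[folded K_def] G])
  also have "\<dots> = (\<integral>\<^sup>+x. emeasure M {\<omega>\<in>space M. \<forall>i\<le>n. Y \<omega> i \<le> x i} \<partial>distr M K X)"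
    by (intro nn_integral_cong) (simp add: slice)
  finally show "emeasure M {\<omega>\<in>space M. \<forall>i\<le>n. Y \<omega> i \<le> X \<omega> i}
      = (\<integral>\<^sup>+x. emeasure M {\<omega>\<in>space M. \<forall>i\<le>n. Y \<omega> i \<le> x i} \<partial>distr M (Pi\<^sub>M {..n} (\<lambda>_. borel)) X)"
    unfolding K_def .
  have "sets (K \<Otimes>\<^sub>M distr M K Y) = sets (K \<Otimes>\<^sub>M K)" by (intro sets_pair_measure_cong) auto
  then have "(\<lambda>x. emeasure (distr M K Y) (Pair x -` G)) \<in> borel_measurable K"
    using G by (simp add: DY.measurable_emeasure_Pair)
  then show "(\<lambda>x. emeasure M {\<omega>\<in>space M. \<forall>i\<le>n. Y \<omega> i \<le> x i}) \<in> borel_measurable (Pi\<^sub>M {..n} (\<lambda>_. borel))"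
    unfolding K_def[symmetric] using slice
    by (subst measurable_cong[where g="\<lambda>x. emeasure (distr M K Y) (Pair x -` G)"]) auto
qed

lemma prob_geo_increments_dominated_le:
  fixes M :: "'a measure" and N :: "'b measure"
  assumes bmY: "bm_on M \<sigma> (-e) e Y"
    and mW: "\<forall>t\<in>{-e..e}. W t \<in> borel_measurable M"
    and bmV: "bm_on N \<sigma> (-e) e V"
    and mZ: "\<forall>t\<in>{-e..e}. Z t \<in> borel_measurable N"
    and dom: "\<forall>\<omega>\<in>space N. \<forall>s\<in>{-e..0}. Z 0 \<omega> - Z s \<omega> \<le> V 0 \<omega> - V s \<omega>"
    and law: "path_law M {-e..e} W = path_law N {-e..e} Z"
    and ind: "prob_space.indep_var M (Pi\<^sub>M {-e..e} (\<lambda>_. borel)) (path_map {-e..e} W)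
           (Pi\<^sub>M {-e..e} (\<lambda>_. borel)) (path_map {-e..e} (\<lambda>t \<omega>. Y t \<omega> - Y (-e) \<omega>))"
    and \<sigma>: "\<sigma> > 0" and e: "e > 0" and m: "m \<ge> 2"
  shows "measure M {\<omega>\<in>space M. \<forall>i\<le>n. Y 0 \<omega> - Y (geo_grid e m i) \<omega> \<le> W 0 \<omega> - W (geo_grid e m i) \<omega>}
     \<le> (15/16)^n + 32 * real n / m"
proof -
  interpret M: prob_space M using bm_on_prob_space[OF bmY] .
  define I where "I = {-e..e}"
  define K where "K = (Pi\<^sub>M {..n} (\<lambda>_. borel) :: (nat \<Rightarrow> real) measure)"
  define incs where "incs p = (\<lambda>i\<in>{..n}. p 0 - p (geo_grid e m i))" for p :: "real \<Rightarrow> real"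
  define Y' where "Y' t \<omega> = Y t \<omega> - Y (-e) \<omega>" for t \<omega>
  have grid: "geo_grid e m i \<in> I" "geo_grid e m i \<in> {-e..0}" for i
    using geo_grid_mem[OF e, of m i] geo_grid_neg[OF e, of m i] m by (auto simp: I_def)
  have "0 \<in> I" using e by (auto simp: I_def)
  then have incs_meas: "incs \<in> measurable (Pi\<^sub>M I (\<lambda>_. borel)) K"
    unfolding incs_def K_def by (intro measurable_restrict borel_measurable_diff measurable_component_singleton grid)
  have incs_path: "incs (path_map I X \<omega>) i = X 0 \<omega> - X (geo_grid e m i) \<omega>" if "i \<le> n"
    for X :: "real \<Rightarrow> 'c \<Rightarrow> real" and \<omega> i
    using that \<open>0 \<in> I\<close> grid by (simp add: incs_def path_map_def)
  have incs_le: "(\<forall>i\<le>n. (incs \<circ> path_map I X) \<omega> i \<le> x i) \<longleftrightarrow> (\<forall>i\<le>n. X 0 \<omega> - X (geo_grid e m i) \<omega> \<le> x i)"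
    for X :: "real \<Rightarrow> 'c \<Rightarrow> real" and \<omega> x
    by (simp add: incs_path)
  have mY': "Y' t \<in> borel_measurable M" if "t \<in> I" for t
    using that bm_on_borel_measurable[OF bmY] e unfolding Y'_def I_def by auto
  have indep: "M.indep_var K (incs \<circ> path_map I W) K (incs \<circ> path_map I Y')"
    using M.indep_var_compose[OF ind[folded I_def Y'_def] incs_meas incs_meas] .
  have incs_le2: "(\<forall>i\<le>n. (incs \<circ> path_map I X) \<omega> i \<le> (incs \<circ> path_map I X') \<omega>' i)
      \<longleftrightarrow> (\<forall>i\<le>n. X 0 \<omega> - X (geo_grid e m i) \<omega> \<le> X' 0 \<omega>' - X' (geo_grid e m i) \<omega>')"
    for X X' :: "real \<Rightarrow> 'c \<Rightarrow> real" and \<omega> \<omega>'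
    by (simp add: incs_path)
  have Y'_le: "(\<forall>i\<le>n. Y' 0 \<omega> - Y' (geo_grid e m i) \<omega> \<le> x i) \<longleftrightarrow> (\<forall>i\<le>n. Y 0 \<omega> - Y (geo_grid e m i) \<omega> \<le> x i)"
    for \<omega> x
    by (simp add: Y'_def)
  note slice = M.emeasure_indep_componentwise_le[OF indep[unfolded K_def], folded K_def]
  have "emeasure M {\<omega>\<in>space M. \<forall>i\<le>n. Y 0 \<omega> - Y (geo_grid e m i) \<omega> \<le> W 0 \<omega> - W (geo_grid e m i) \<omega>}
      = (\<integral>\<^sup>+x. emeasure M {\<omega>\<in>space M. \<forall>i\<le>n. Y 0 \<omega> - Y (geo_grid e m i) \<omega> \<le> x i} \<partial>distr M K (incs \<circ> path_map I W))"
    using slice(1) by (simp only: incs_le2 incs_le Y'_le)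
  also have "distr M K (incs \<circ> path_map I W) = distr N K (incs \<circ> path_map I Z)"
    using law mW mZ unfolding I_def by (intro distr_comp_path_map_eq incs_meas[unfolded I_def]) auto
  also have "(\<integral>\<^sup>+x. emeasure M {\<omega>\<in>space M. \<forall>i\<le>n. Y 0 \<omega> - Y (geo_grid e m i) \<omega> \<le> x i} \<partial>distr N K (incs \<circ> path_map I Z))
      = (\<integral>\<^sup>+\<omega>. emeasure M {\<omega>'\<in>space M. \<forall>i\<le>n. Y 0 \<omega>' - Y (geo_grid e m i) \<omega>' \<le> (incs \<circ> path_map I Z) \<omega> i} \<partial>N)"
  proof (rule nn_integral_distr)
    show "incs \<circ> path_map I Z \<in> measurable N K"
      using incs_meas measurable_path_map[of I Z N] mZ unfolding I_def by auto
    show "(\<lambda>x. emeasure M {\<omega>\<in>space M. \<forall>i\<le>n. Y 0 \<omega> - Y (geo_grid e m i) \<omega> \<le> x i})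
        \<in> borel_measurable (distr N K (incs \<circ> path_map I Z))"
      using slice(2) by (simp only: incs_le Y'_le measurable_distr_eq1)
  qed
  also have "\<dots> \<le> (\<integral>\<^sup>+\<omega>. domination_bound \<sigma> e m n (\<lambda>i. V 0 \<omega> - V (geo_grid e m i) \<omega>) \<partial>N)"
  proof (rule nn_integral_mono)
    fix \<omega> assume \<omega>: "\<omega> \<in> space N"
    have "(incs \<circ> path_map I Z) \<omega> i \<le> V 0 \<omega> - V (geo_grid e m i) \<omega>" if "i \<le> n" for i
    proof -
      have "(incs \<circ> path_map I Z) \<omega> i = Z 0 \<omega> - Z (geo_grid e m i) \<omega>"
        using incs_path[OF that] by simp
      also have "\<dots> \<le> V 0 \<omega> - V (geo_grid e m i) \<omega>" using dom \<omega> grid(2) by blast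
      finally show ?thesis .
    qed
    then show "emeasure M {\<omega>'\<in>space M. \<forall>i\<le>n. Y 0 \<omega>' - Y (geo_grid e m i) \<omega>' \<le> (incs \<circ> path_map I Z) \<omega> i}
        \<le> domination_bound \<sigma> e m n (\<lambda>i. V 0 \<omega> - V (geo_grid e m i) \<omega>)"
      by (rule emeasure_geo_dominated_le[OF bmY \<sigma> e m])
  qed
  also have "\<dots> \<le> ennreal ((15/16)^n + 32 * real n / m)"
    by (rule nn_integral_domination_bound_le[OF bmV \<sigma> e m])
  finally have "emeasure M {\<omega>\<in>space M. \<forall>i\<le>n. Y 0 \<omega> - Y (geo_grid e m i) \<omega> \<le> W 0 \<omega> - W (geo_grid e m i) \<omega>}
      \<le> ennreal ((15/16)^n + 32 * real n / m)" .
  moreover have "0 \<le> (15/16::real)^n + 32 * real n / m" using m by simp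
  ultimately show ?thesis by (simp only: M.emeasure_eq_measure ennreal_le_iff)
qed

lemma has_law_cont_process:
  "has_law_mu M sig e W \<or> has_law_mu_minus M sig e W \<or> has_law_mu_plus M sig e W \<Longrightarrow> cont_process M e W"
  unfolding has_law_mu_def has_law_mu_minus_def has_law_mu_plus_def by blast

definition bm_dominated_copy :: "'a measure \<Rightarrow> real \<Rightarrow> real \<Rightarrow> (real \<Rightarrow> 'a \<Rightarrow> real) \<Rightarrow> bool" where
  "bm_dominated_copy M sig e W \<longleftrightarrow> (\<exists>(N::aux_space measure) Z V. bm_on N sig (-e) e V \<and>
     (\<forall>t\<in>{-e..e}. Z t \<in> borel_measurable N) \<and>
     (\<forall>\<omega>\<in>space N. \<forall>s\<in>{-e..0}. Z 0 \<omega> - Z s \<omega> \<le> V 0 \<omega> - V s \<omega>) \<and>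
     path_law M {-e..e} W = path_law N {-e..e} Z)"

lemma has_law_mu_imp_bm_dominated_copy:
  assumes "has_law_mu M sig e W"
  shows "bm_dominated_copy M sig e W"
proof -
  obtain N :: "aux_space measure" and V where V: "two_sided_bm N sig e V"
    and law: "path_law M {-e..e} W = path_law N {-e..e} V"
    using assms unfolding has_law_mu_def by blast
  then have bmV: "bm_on N sig (-e) e V" by (simp add: two_sided_bm_def)
  then show ?thesis
    unfolding bm_dominated_copy_def using law bm_on_borel_measurable[OF bmV] by blast
qed

lemma has_law_mu_minus_imp_bm_dominated_copy:
  assumes "has_law_mu_minus M sig e W" and e: "0 < e"
  shows "bm_dominated_copy M sig e W"
proof -
  obtain N :: "aux_space measure" and V B where V: "two_sided_bm N sig e V"
    and bmB: "bm_on N sig 0 e B"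
    and law: "path_law M {-e..e} W = path_law N {-e..e} (\<lambda>t \<omega>. if t \<le> 0 then V t \<omega>
                                    else reflect 0 e (\<lambda>s. V s \<omega>) (\<lambda>s. B s \<omega>) t)"
    using assms unfolding has_law_mu_minus_def by blast
  have bmV: "bm_on N sig (-e) e V" using V by (simp add: two_sided_bm_def)
  define Z where "Z = (\<lambda>t \<omega>. if t \<le> 0 then V t \<omega> else reflect 0 e (\<lambda>s. V s \<omega>) (\<lambda>s. B s \<omega>) t)"
  have "Z t \<in> borel_measurable N" if t: "t \<in> {-e..e}" for t
  proof (cases "t \<le> 0")
    case True
    then show ?thesis using bm_on_borel_measurable[OF bmV t] by (simp add: Z_def)
  next
    case False
    have "\<forall>\<omega>\<in>space N. continuous_on {0..e} (\<lambda>s. V s \<omega>)"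
      using bm_on_continuous[OF bmV] continuous_on_subset[of "{-e..e}" _ "{0..e}"] by auto
    then have "(\<lambda>\<omega>. reflect 0 e (\<lambda>s. V s \<omega>) (\<lambda>s. B s \<omega>) t) \<in> borel_measurable N"
      using False t bm_on_continuous[OF bmB] bm_on_borel_measurable[OF bmV] bm_on_borel_measurable[OF bmB] e
      by (intro borel_measurable_reflect) auto
    then show ?thesis using False by (simp add: Z_def)
  qed
  moreover have "\<forall>\<omega>\<in>space N. \<forall>s\<in>{-e..0}. Z 0 \<omega> - Z s \<omega> \<le> V 0 \<omega> - V s \<omega>"
    by (simp add: Z_def)
  ultimately show ?thesis
    unfolding bm_dominated_copy_def using bmV law[folded Z_def] by blast
qed

text \<open>Here the left half of W is V reflected upwards, which can only decrease the increments
  W 0 - W s for s \<le> 0.\<close>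
lemma has_law_mu_plus_imp_bm_dominated_copy:
  assumes "has_law_mu_plus M sig e W" and e: "0 < e"
  shows "bm_dominated_copy M sig e W"
proof -
  obtain N :: "aux_space measure" and V B where V: "two_sided_bm N sig e V"
    and bmB: "bm_on N sig 0 e B" and B0: "\<forall>\<omega>\<in>space N. B 0 \<omega> = 0"
    and law: "path_law M {-e..e} W = path_law N {-e..e} (\<lambda>t \<omega>. if 0 \<le> t then V t \<omega>
                                    else reflect 0 e (\<lambda>s. V (-s) \<omega>) (\<lambda>s. B s \<omega>) (-t))"
    using assms unfolding has_law_mu_plus_def by blast
  have bmV: "bm_on N sig (-e) e V" and V0: "\<forall>\<omega>\<in>space N. V 0 \<omega> = 0"
    using V by (simp_all add: two_sided_bm_def)
  define Z where "Z = (\<lambda>t \<omega>. if 0 \<le> t then V t \<omega> else reflect 0 e (\<lambda>s. V (-s) \<omega>) (\<lambda>s. B s \<omega>) (-t))"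
  have cV: "continuous_on {0..e} (\<lambda>s. V (-s) \<omega>)" if "\<omega> \<in> space N" for \<omega>
  proof -
    have "continuous_on {0..e} (\<lambda>s. - s)" by (intro continuous_intros)
    moreover have "(\<lambda>s. - s) ` {0..e} \<subseteq> {-e..e}" by auto
    ultimately show ?thesis using continuous_on_compose2[OF bm_on_continuous[OF bmV that]] by blast
  qed
  have "Z t \<in> borel_measurable N" if t: "t \<in> {-e..e}" for t
  proof (cases "0 \<le> t")
    case True
    then show ?thesis using bm_on_borel_measurable[OF bmV t] by (simp add: Z_def)
  next
    case False
    have "(\<lambda>\<omega>. reflect 0 e (\<lambda>s. V (-s) \<omega>) (\<lambda>s. B s \<omega>) (-t)) \<in> borel_measurable N"
      using False t cV bm_on_continuous[OF bmB] bm_on_borel_measurable[OF bmV] bm_on_borel_measurable[OF bmB]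
      by (intro borel_measurable_reflect[where F="\<lambda>s. V (-s)"]) auto
    then show ?thesis using False by (simp add: Z_def)
  qed
  moreover have "Z 0 \<omega> - Z s \<omega> \<le> V 0 \<omega> - V s \<omega>" if \<omega>: "\<omega> \<in> space N" and s: "s \<in> {-e..0}" for \<omega> s
  proof -
    have "V s \<omega> \<le> Z s \<omega>"
    proof (cases "s = 0")
      case False
      have "B (-s) \<omega> + (V (- (-s)) \<omega> - B (-s) \<omega>) \<le> reflect 0 e (\<lambda>s. V (-s) \<omega>) (\<lambda>s. B s \<omega>) (-s)"
        using s B0 V0 \<omega> cV[OF \<omega>] bm_on_continuous[OF bmB \<omega>] by (intro reflect_ge) auto
      then show ?thesis using False s by (simp add: Z_def)
    qed (simp add: Z_def)
    then show ?thesis by (simp add: Z_def)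
  qed
  ultimately show ?thesis
    unfolding bm_dominated_copy_def using bmV law[folded Z_def] by blast
qed

lemma has_law_imp_bm_dominated_copy:
  "has_law_mu M sig e W \<or> has_law_mu_minus M sig e W \<or> has_law_mu_plus M sig e W \<Longrightarrow> 0 < e
    \<Longrightarrow> bm_dominated_copy M sig e W"
  using has_law_mu_imp_bm_dominated_copy has_law_mu_minus_imp_bm_dominated_copy
    has_law_mu_plus_imp_bm_dominated_copy by blast

section \<open>The reflected path near time 0\<close>

lemma continuous_on_pos_near_0:
  fixes \<phi> :: "real \<Rightarrow> real"
  assumes cont: "continuous_on {-e..e} \<phi>" and e: "0 < e" and pos: "\<phi> 0 > 0"
  obtains k :: nat where "\<forall>t\<in>{-(e / Suc k)..e / Suc k}. \<phi> t > 0"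
proof -
  have "0 \<in> {-e..e}" using e by simp
  then obtain d where d: "d > 0" "\<forall>t\<in>{-e..e}. dist t 0 < d \<longrightarrow> dist (\<phi> t) (\<phi> 0) < \<phi> 0"
    using cont pos unfolding continuous_on_iff by blast
  obtain k :: nat where "e / d < real k" using reals_Archimedean2 by blast
  then have "e / d < real (Suc k)" by simp
  then have k: "e / Suc k < d" using d(1) e by (simp add: divide_less_eq field_simps)
  have "e / Suc k \<le> e" using e by (simp add: divide_le_eq)
  have "\<phi> t > 0" if "t \<in> {-(e / Suc k)..e / Suc k}" for t
  proof -
    have "t \<in> {-e..e}" "dist t 0 < d" using that k \<open>e / Suc k \<le> e\<close> by (auto simp: dist_real_def)
    then have "\<bar>\<phi> t - \<phi> 0\<bar> < \<phi> 0" using d(2) by (simp add: dist_real_def)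
    then show ?thesis by (simp add: abs_less_iff)
  qed
  then show thesis using that by blast
qed

lemma prob_pos_on_window_ge:
  fixes g :: "real \<Rightarrow> 'a \<Rightarrow> real"
  assumes "prob_space M" and e: "0 < e"
    and cont: "\<forall>\<omega>\<in>space M. continuous_on {-e..e} (\<lambda>t. g t \<omega>)"
    and meas: "\<forall>t\<in>{-e..e}. g t \<in> borel_measurable M"
    and q: "measure M {\<omega>\<in>space M. g 0 \<omega> \<le> 0} < q"
  shows "\<exists>e'\<in>{0<..e}. measure M {\<omega>\<in>space M. \<forall>t\<in>{-e'..e'}. g t \<omega> > 0} \<ge> 1 - q"
proof -
  interpret prob_space M by fact
  have "g 0 \<in> borel_measurable M" using meas e by simp
  then have "{\<omega>\<in>space M. g 0 \<omega> \<le> 0} \<in> sets M" by measurable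
  moreover have "space M - {\<omega>\<in>space M. g 0 \<omega> \<le> 0} = {\<omega>\<in>space M. g 0 \<omega> > 0}" by auto
  ultimately have p: "measure M {\<omega>\<in>space M. g 0 \<omega> > 0} > 1 - q"
    using prob_compl[of "{\<omega>\<in>space M. g 0 \<omega> \<le> 0}"] q by simp
  define S where "S k = {\<omega>\<in>space M. \<forall>t\<in>{-(e / Suc k)..e / Suc k}. g t \<omega> > 0}" for k :: nat
  have ek: "0 < e / Suc k" "e / Suc k \<le> e" for k :: nat
    using e by (auto simp: divide_le_eq)
  have sS: "S k \<in> sets M" for k
  proof -
    have sub: "{-(e / Suc k)..e / Suc k} \<subseteq> {-e..e}" using ek[of k] by auto
    show ?thesis unfolding S_def
      using ek[of k] cont meas sub continuous_on_subset[OF _ sub]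
      by (intro sets_Collect_forall_pos_continuous) auto
  qed
  have "incseq S"
  proof (rule incseq_SucI)
    fix k
    have "e / Suc (Suc k) \<le> e / Suc k" using e by (simp add: frac_le)
    then show "S k \<subseteq> S (Suc k)" unfolding S_def by auto
  qed
  then have "(\<lambda>k. measure M (S k)) \<longlonglongrightarrow> measure M (\<Union>k. S k)"
    using sS by (intro finite_Lim_measure_incseq) auto
  moreover have "{\<omega>\<in>space M. g 0 \<omega> > 0} \<subseteq> (\<Union>k. S k)"
  proof
    fix \<omega> assume "\<omega> \<in> {\<omega>\<in>space M. g 0 \<omega> > 0}"
    then have \<omega>: "\<omega> \<in> space M" "g 0 \<omega> > 0" by auto
    then have "continuous_on {-e..e} (\<lambda>t. g t \<omega>)" using cont by blast
    then obtain k where "\<forall>t\<in>{-(e / Suc k)..e / Suc k}. g t \<omega> > 0"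
      using e \<omega>(2) by (rule continuous_on_pos_near_0)
    then show "\<omega> \<in> (\<Union>k. S k)" using \<omega>(1) unfolding S_def by blast
  qed
  then have "measure M (\<Union>k. S k) > 1 - q"
    using p sS by (intro less_le_trans[OF p finite_measure_mono]) auto
  ultimately have "eventually (\<lambda>k. measure M (S k) > 1 - q) sequentially"
    by (rule order_tendstoD(1))
  then obtain k where "measure M (S k) > 1 - q" by (auto simp: eventually_sequentially)
  then show ?thesis using ek[of k] unfolding S_def by (intro bexI[of _ "e / Suc k"]) auto
qed

lemma exists_geo_grid_parameters:
  assumes "0 < \<delta>"
  obtains n :: nat and m :: real where "2 \<le> m" "(15/16)^n + 32 * real n / m \<le> \<delta>"
proof -
  obtain n :: nat where n: "(15/16::real) ^ n < \<delta>/2"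
    using real_arch_pow_inv[of "\<delta>/2" "15/16::real"] assms by auto
  define m :: real where "m = 2 + 64 * real n / \<delta>"
  have "2 \<le> m" using assms by (simp add: m_def)
  moreover have "32 * real n / m \<le> \<delta>/2"
  proof -
    have "64 * real n \<le> \<delta> * m" using assms by (simp add: m_def field_simps)
    then show ?thesis using \<open>2 \<le> m\<close> assms by (simp add: field_simps)
  qed
  ultimately show thesis using n by (intro that[of m n]) auto
qed

lemma reflect_minus_continuous_measurable:
  fixes F G :: "real \<Rightarrow> 'a \<Rightarrow> real"
  assumes cF: "\<forall>\<omega>\<in>space M. continuous_on {a..b} (\<lambda>s. F s \<omega>)"
    and cG: "\<forall>\<omega>\<in>space M. continuous_on {a..b} (\<lambda>s. G s \<omega>)"
    and mF: "\<forall>s\<in>{a..b}. F s \<in> borel_measurable M"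
    and mG: "\<forall>s\<in>{a..b}. G s \<in> borel_measurable M"
  shows "\<forall>\<omega>\<in>space M. continuous_on {a..b} (\<lambda>t. reflect a b (\<lambda>s. F s \<omega>) (\<lambda>s. G s \<omega>) t - F t \<omega>)"
    and "\<forall>t\<in>{a..b}. (\<lambda>\<omega>. reflect a b (\<lambda>s. F s \<omega>) (\<lambda>s. G s \<omega>) t - F t \<omega>) \<in> borel_measurable M"
proof -
  show "\<forall>\<omega>\<in>space M. continuous_on {a..b} (\<lambda>t. reflect a b (\<lambda>s. F s \<omega>) (\<lambda>s. G s \<omega>) t - F t \<omega>)"
  proof
    fix \<omega> assume "\<omega> \<in> space M"
    then have "continuous_on {a..b} (reflect a b (\<lambda>s. F s \<omega>) (\<lambda>s. G s \<omega>))"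
      using cF cG by (intro continuous_on_reflect) auto
    then show "continuous_on {a..b} (\<lambda>t. reflect a b (\<lambda>s. F s \<omega>) (\<lambda>s. G s \<omega>) t - F t \<omega>)"
      using cF \<open>\<omega> \<in> space M\<close> by (intro continuous_intros) auto
  qed
  show "\<forall>t\<in>{a..b}. (\<lambda>\<omega>. reflect a b (\<lambda>s. F s \<omega>) (\<lambda>s. G s \<omega>) t - F t \<omega>) \<in> borel_measurable M"
    using mF borel_measurable_reflect[OF _ _ cF cG mF mG] by (auto intro!: borel_measurable_diff)
qed

lemma prob_reflect_le_at_0_le:
  fixes W W'' :: "real \<Rightarrow> 'a \<Rightarrow> real"
  assumes "prob_space M" and e: "0 < e" and m: "1 \<le> m"
    and cW: "\<forall>\<omega>\<in>space M. continuous_on {-e..e} (\<lambda>t. W t \<omega>)"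
    and cW'': "\<forall>\<omega>\<in>space M. continuous_on {-e..e} (\<lambda>t. W'' t \<omega>)"
    and mW: "\<forall>t\<in>{-e..e}. W t \<in> borel_measurable M"
    and mW'': "\<forall>t\<in>{-e..e}. W'' t \<in> borel_measurable M"
    and start: "AE \<omega> in M. W'' (-e) \<omega> \<ge> W (-e) \<omega>"
  shows "measure M {\<omega>\<in>space M. reflect (-e) e (\<lambda>s. W s \<omega>) (\<lambda>s. W'' s \<omega>) 0 \<le> W 0 \<omega>}
    \<le> measure M {\<omega>\<in>space M. \<forall>i\<le>n. W'' 0 \<omega> - W'' (geo_grid e m i) \<omega> \<le> W 0 \<omega> - W (geo_grid e m i) \<omega>}"
proof -
  interpret prob_space M by fact
  have grid: "geo_grid e m i \<in> {-e..0}" for i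
    using geo_grid_mem[OF e m, of i] geo_grid_neg[OF e, of m i] m by auto
  have "AE \<omega> in M. \<omega> \<in> {\<omega>\<in>space M. reflect (-e) e (\<lambda>s. W s \<omega>) (\<lambda>s. W'' s \<omega>) 0 \<le> W 0 \<omega>} \<longrightarrow>
      \<omega> \<in> {\<omega>\<in>space M. \<forall>i\<le>n. W'' 0 \<omega> - W'' (geo_grid e m i) \<omega> \<le> W 0 \<omega> - W (geo_grid e m i) \<omega>}"
    using start
  proof (rule AE_mp, intro AE_I2 impI)
    fix \<omega> assume "\<omega> \<in> space M" "W'' (-e) \<omega> \<ge> W (-e) \<omega>"
      and "\<omega> \<in> {\<omega>\<in>space M. reflect (-e) e (\<lambda>s. W s \<omega>) (\<lambda>s. W'' s \<omega>) 0 \<le> W 0 \<omega>}"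
    then show "\<omega> \<in> {\<omega>\<in>space M. \<forall>i\<le>n. W'' 0 \<omega> - W'' (geo_grid e m i) \<omega> \<le> W 0 \<omega> - W (geo_grid e m i) \<omega>}"
      using grid cW cW'' e by (auto intro!: reflect_le_imp_increment_le[of "-e" _ 0 e])
  qed
  moreover have "{\<omega>\<in>space M. \<forall>i\<le>n. W'' 0 \<omega> - W'' (geo_grid e m i) \<omega> \<le> W 0 \<omega> - W (geo_grid e m i) \<omega>} \<in> sets M"
  proof -
    have [measurable]: "W 0 \<in> borel_measurable M" "W'' 0 \<in> borel_measurable M"
      "W (geo_grid e m i) \<in> borel_measurable M" "W'' (geo_grid e m i) \<in> borel_measurable M" for i
      using mW mW'' geo_grid_mem[OF e m] e by auto
    show ?thesis by measurable
  qed
  ultimately show ?thesis by (rule finite_measure_mono_AE)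
qed

theorem mainTheorem17:
  fixes M :: "'a measure" and sig e \<delta> :: real and W W'' :: "real \<Rightarrow> 'a \<Rightarrow> real"
  assumes "sig > 0" and "e > 0"
    and "has_law_mu M sig e W \<or> has_law_mu_minus M sig e W \<or> has_law_mu_plus M sig e W"
    and "bm_on M sig (-e) e W''"
    and "prob_space.indep_var M (Pi\<^sub>M {-e..e} (\<lambda>_. borel)) (path_map {-e..e} W)
           (Pi\<^sub>M {-e..e} (\<lambda>_. borel)) (path_map {-e..e} (\<lambda>t \<omega>. W'' t \<omega> - W'' (-e) \<omega>))"
    and "AE \<omega> in M. W'' (-e) \<omega> \<ge> W (-e) \<omega>"
    and "\<delta> > 0"
  shows "\<exists>e'\<in>{0<..e}.
           measure M {\<omega>\<in>space M. \<forall>t\<in>{-e'..e'}.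
              reflect (-e) e (\<lambda>s. W s \<omega>) (\<lambda>s. W'' s \<omega>) t > W t \<omega>} \<ge> 1 - \<delta>"
proof -
  note e = assms(2) and bmW'' = assms(4)
  interpret prob_space M using bm_on_prob_space[OF bmW''] .
  have "0 < \<delta>/2" using assms(7) by simp
  then obtain n m where m: "2 \<le> m" and nm: "(15/16)^n + 32 * real n / m \<le> \<delta>/2"
    by (rule exists_geo_grid_parameters)
  obtain N :: "aux_space measure" and Z V where bmV: "bm_on N sig (-e) e V"
    and mZ: "\<forall>t\<in>{-e..e}. Z t \<in> borel_measurable N"
    and dom: "\<forall>\<omega>\<in>space N. \<forall>s\<in>{-e..0}. Z 0 \<omega> - Z s \<omega> \<le> V 0 \<omega> - V s \<omega>"
    and law: "path_law M {-e..e} W = path_law N {-e..e} Z"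
    using has_law_imp_bm_dominated_copy[OF assms(3) e] unfolding bm_dominated_copy_def by blast
  have mW: "\<forall>t\<in>{-e..e}. W t \<in> borel_measurable M" and cW: "\<forall>\<omega>\<in>space M. continuous_on {-e..e} (\<lambda>t. W t \<omega>)"
    using has_law_cont_process[OF assms(3)] unfolding cont_process_def by blast+
  have cW'': "\<forall>\<omega>\<in>space M. continuous_on {-e..e} (\<lambda>t. W'' t \<omega>)"
    and mW'': "\<forall>t\<in>{-e..e}. W'' t \<in> borel_measurable M"
    using bm_on_continuous[OF bmW''] bm_on_borel_measurable[OF bmW''] by blast+
  define g where "g t \<omega> = reflect (-e) e (\<lambda>s. W s \<omega>) (\<lambda>s. W'' s \<omega>) t - W t \<omega>" for t \<omega>
  note g_regular = reflect_minus_continuous_measurable[OF cW cW'' mW mW'', folded g_def]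
  have "{\<omega>\<in>space M. g 0 \<omega> \<le> 0} = {\<omega>\<in>space M. reflect (-e) e (\<lambda>s. W s \<omega>) (\<lambda>s. W'' s \<omega>) 0 \<le> W 0 \<omega>}"
    by (auto simp: g_def)
  also have "measure M \<dots> \<le> (15/16)^n + 32 * real n / m"
    using prob_reflect_le_at_0_le[OF prob_space_axioms e _ cW cW'' mW mW'' assms(6)]
      prob_geo_increments_dominated_le[OF bmW'' mW bmV mZ dom law assms(5,1,2) m] m
    by (meson one_le_numeral order.trans)
  finally have "measure M {\<omega>\<in>space M. g 0 \<omega> \<le> 0} < \<delta>" using nm assms(7) by linarith
  then show ?thesis
    using prob_pos_on_window_ge[OF prob_space_axioms e g_regular] unfolding g_def by simp
qed

end
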